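(* Let $A$ be a unital semi-simple commutative Banach algebra, $U$ an automorphism of $A$, and $w \in A$. Let $T = wU$ and let $\check{T}$ be the associated weighted composition operator on $\check{A}$. Then $\sigma_r(\check{T}) := \sigma(\check{T}) \setminus \sigma_{a.p.}(\check{T}) \subset \sigma(T)$, where $\sigma_{a.p.}(\check{T})$ is the approximate point spectrum of $\check{T}$.
   Context: $A$ is a unital commutative semi-simple Banach algebra with maximal ideal space $\mathfrak{M}_A$ and Shilov boundary $\partial A$. For $f\in A$, $\check f$ is the restriction of the Gelfand transform $\hat f$ to $\partial A$; $\check A$ is the closure of $\{\check f: f\in A\}$ in $C(\partial A)$ with sup norm. The automorphism $U$ induces a homeomorphism $\varphi$ of $\mathfrak{M}_A$ by $\widehat{Uf}(m)=\hat f(\varphi(m))$, with $\varphi(\partial A)=\partial A$. $T=wU$ means $Tf=w\cdot Uf$; $\check T$ is the operator on $\check A$ given by $(\check Tg)(t)=\check w(t)g(\varphi(t))$, $t\in\partial A$. *)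

theory Defs
  imports "HOL-Analysis.Analysis"
begin

text \<open>A complex unital commutative Banach algebra is modelled as a real unital commutative
Banach algebra (type class) together with an element j playing the role of i*1; complex
scalar multiplication is c . x = Re c x + Im c (j x).\<close>

definition cscale :: "'a::real_normed_algebra_1 \<Rightarrow> complex \<Rightarrow> 'a \<Rightarrow> 'a" where
  "cscale j c x = Re c *\<^sub>R x + Im c *\<^sub>R (j * x)"

definition complex_banach_algebra :: "'a::{real_normed_algebra_1,banach,comm_ring_1} \<Rightarrow> bool" where
  "complex_banach_algebra j \<longleftrightarrow> j * j = -1 \<and> (\<forall>c x. norm (cscale j c x) = cmod c * norm x)"

definition ring_ideal :: "'a::comm_ring_1 set \<Rightarrow> bool" where
  "ring_ideal I \<longleftrightarrow> 0 \<in> I \<and> (\<forall>x\<in>I. \<forall>y\<in>I. x + y \<in> I) \<and> (\<forall>a. \<forall>x\<in>I. a * x \<in> I)"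

definition maximal_ideal :: "'a::comm_ring_1 set \<Rightarrow> bool" where
  "maximal_ideal I \<longleftrightarrow> ring_ideal I \<and> I \<noteq> UNIV \<and>
     (\<forall>J. ring_ideal J \<and> I \<subseteq> J \<and> J \<noteq> UNIV \<longrightarrow> J = I)"

definition semisimple :: "'a::comm_ring_1 itself \<Rightarrow> bool" where
  "semisimple _ \<longleftrightarrow> \<Inter>{I :: 'a set. maximal_ideal I} = {0}"

text \<open>Maximal ideal space = nonzero complex-linear multiplicative functionals.\<close>
definition characters :: "'a::{real_normed_algebra_1,comm_ring_1} \<Rightarrow> ('a \<Rightarrow> complex) set" where
  "characters j = {h. (\<forall>x y. h (x + y) = h x + h y) \<and> (\<forall>x y. h (x * y) = h x * h y) \<and>
      (\<forall>r x. h (r *\<^sub>R x) = complex_of_real r * h x) \<and> h 1 = 1 \<and> h j = \<i>}"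

definition gelfand_top :: "'a::{real_normed_algebra_1,comm_ring_1} \<Rightarrow> ('a \<Rightarrow> complex) topology" where
  "gelfand_top j = subtopology (product_topology (\<lambda>_. euclidean) UNIV) (characters j)"

definition is_boundary :: "'a::{real_normed_algebra_1,comm_ring_1} \<Rightarrow> ('a \<Rightarrow> complex) set \<Rightarrow> bool" where
  "is_boundary j B \<longleftrightarrow> B \<subseteq> characters j \<and>
     (\<forall>f. \<exists>m\<in>B. \<forall>m'\<in>characters j. cmod (m' f) \<le> cmod (m f))"

definition shilov_boundary :: "'a::{real_normed_algebra_1,comm_ring_1} \<Rightarrow> ('a \<Rightarrow> complex) set" where
  "shilov_boundary j = \<Inter>{B. closedin (gelfand_top j) B \<and> is_boundary j B}"

text \<open>Elements of the check-algebra: functions on the Shilov boundary (zero outside), which are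
uniform limits on the Shilov boundary of restricted Gelfand transforms.\<close>
definition check_algebra :: "'a::{real_normed_algebra_1,comm_ring_1} \<Rightarrow> (('a \<Rightarrow> complex) \<Rightarrow> complex) set" where
  "check_algebra j = {g. (\<forall>t. t \<notin> shilov_boundary j \<longrightarrow> g t = 0) \<and>
      (\<forall>e>0. \<exists>f. \<forall>t\<in>shilov_boundary j. cmod (g t - t f) < e)}"

definition sup_norm :: "'b set \<Rightarrow> ('b \<Rightarrow> complex) \<Rightarrow> real" where
  "sup_norm S g = (SUP t\<in>S. cmod (g t))"

definition alg_automorphism :: "'a::{real_normed_algebra_1,comm_ring_1} \<Rightarrow> ('a \<Rightarrow> 'a) \<Rightarrow> bool" where
  "alg_automorphism j U \<longleftrightarrow> bij U \<and> bounded_linear U \<and> (\<forall>x y. U (x * y) = U x * U y) \<and>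
      U 1 = 1 \<and> U j = j"

definition check_op :: "'a::{real_normed_algebra_1,comm_ring_1} \<Rightarrow> 'a \<Rightarrow> ('a \<Rightarrow> 'a)
    \<Rightarrow> (('a \<Rightarrow> complex) \<Rightarrow> complex) \<Rightarrow> (('a \<Rightarrow> complex) \<Rightarrow> complex)" where
  "check_op j w U g = (\<lambda>t. if t \<in> shilov_boundary j then t w * g (t \<circ> U) else 0)"

text \<open>Spectrum of an operator L on a space X of complex functions (bounded operator on a Banach
space: lambda is in the spectrum iff L - lambda is not bijective).\<close>
definition fun_spectrum :: "('b \<Rightarrow> complex) set \<Rightarrow> (('b \<Rightarrow> complex) \<Rightarrow> ('b \<Rightarrow> complex)) \<Rightarrow> complex set" where
  "fun_spectrum X L = {c. \<not> bij_betw (\<lambda>g t. L g t - c * g t) X X}"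

definition fun_ap_spectrum :: "'b set \<Rightarrow> ('b \<Rightarrow> complex) set \<Rightarrow> (('b \<Rightarrow> complex) \<Rightarrow> ('b \<Rightarrow> complex)) \<Rightarrow> complex set" where
  "fun_ap_spectrum S X L = {c. \<forall>e>0. \<exists>g\<in>X. sup_norm S g = 1 \<and> sup_norm S (\<lambda>t. L g t - c * g t) < e}"

definition alg_spectrum :: "'a::real_normed_algebra_1 \<Rightarrow> ('a \<Rightarrow> 'a) \<Rightarrow> complex set" where
  "alg_spectrum j T = {c. \<not> bij (\<lambda>f. T f - cscale j c f)}"

end

theory Submission
  imports Defs
begin

text \<open>If c lies outside the spectrum of T and outside the approximate point spectrum of the
  check operator, then the check operator minus c is bounded below on the check algebra. It maps
  the restricted Gelfand transform of f to that of (T - c) f, and T - c is onto, so its range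
  contains all restricted Gelfand transforms; these are dense, and a bounded below operator on a
  complete space has closed range. Hence it is bijective, and c is not in its spectrum.

  That identity needs the Shilov boundary to consist of characters and to be invariant under
  composition with U. As the Shilov boundary is the intersection of all closed boundaries, the
  first point needs one closed boundary: the character space itself, which is compact by
  Tychonoff's theorem and nonempty because semisimplicity provides a maximal ideal, whose quotient
  is the complex field by the Gelfand--Mazur theorem.\<close>

section \<open>Complex scalars\<close>

definition embed_complex :: "'a::real_normed_algebra_1 \<Rightarrow> complex \<Rightarrow> 'a" where
  "embed_complex j c = Re c *\<^sub>R 1 + Im c *\<^sub>R j"

lemma cscale_eq_embed_complex_mult: "cscale j c x = embed_complex j c * x"
  unfolding cscale_def embed_complex_def by (simp add: algebra_simps)

lemma embed_complex_add: "embed_complex j (c + d) = embed_complex j c + embed_complex j d"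
  unfolding embed_complex_def by (simp add: algebra_simps)

lemma embed_complex_diff: "embed_complex j (c - d) = embed_complex j c - embed_complex j d"
  unfolding embed_complex_def by (simp add: algebra_simps)

lemma embed_complex_minus: "embed_complex j (- c) = - embed_complex j c"
  unfolding embed_complex_def by (simp add: algebra_simps)

lemma embed_complex_0 [simp]: "embed_complex j 0 = 0"
  and embed_complex_1 [simp]: "embed_complex j 1 = 1"
  and embed_complex_ii [simp]: "embed_complex j \<i> = j"
  unfolding embed_complex_def by simp_all

lemma embed_complex_of_real: "embed_complex j (complex_of_real r) = r *\<^sub>R 1"
  unfolding embed_complex_def by simp

lemma embed_complex_of_nat: "embed_complex j (of_nat n) = of_nat n"
  using embed_complex_of_real[of j "real n"] by (simp add: scaleR_conv_of_real)

locale complex_banach_alg =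
  fixes j :: "'a::{real_normed_algebra_1,banach,comm_ring_1}"
  assumes complex_banach: "complex_banach_algebra j"
begin

lemma j_mult_j: "j * j = -1"
  using complex_banach unfolding complex_banach_algebra_def by simp

lemma embed_complex_mult: "embed_complex j (c * d) = embed_complex j c * embed_complex j d"
proof -
  have "embed_complex j c * embed_complex j d = (Re c * Re d) *\<^sub>R 1 + (Re c * Im d) *\<^sub>R j
      + (Im c * Re d) *\<^sub>R j + (Im c * Im d) *\<^sub>R (j * j)"
    unfolding embed_complex_def by (simp add: algebra_simps)
  also have "\<dots> = embed_complex j (c * d)"
    unfolding embed_complex_def j_mult_j by (simp add: algebra_simps)
  finally show ?thesis by simp
qed

lemma embed_complex_mult_inverse: "c \<noteq> 0 \<Longrightarrow> embed_complex j c * embed_complex j (1 / c) = 1"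
  by (simp flip: embed_complex_mult)

lemma norm_embed_complex_mult: "norm (embed_complex j c * x) = cmod c * norm x"
  using complex_banach unfolding complex_banach_algebra_def cscale_eq_embed_complex_mult by simp

lemma norm_embed_complex: "norm (embed_complex j c) = cmod c"
  using norm_embed_complex_mult[of c 1] by simp

lemma embed_complex_half_double: "embed_complex j (1 / 2) * (y + y) = y"
proof -
  have two: "embed_complex j 2 = 2"
    using embed_complex_of_nat[of j 2] by simp
  have "embed_complex j (1 / 2) * (y + y) = (embed_complex j (1 / 2) * embed_complex j 2) * y"
    by (simp only: two mult.assoc mult_2)
  also have "embed_complex j (1 / 2) * embed_complex j 2 = 1"
    by (simp flip: embed_complex_mult)
  finally show ?thesis by simp
qed

end

lemma one_minus_right_inverse:
  fixes y :: "'a::{real_normed_algebra_1,banach}"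
  assumes "norm y < 1"
  obtains z where "(1 - y) * z = 1" "norm z \<le> 1 / (1 - norm y)"
proof -
  have "summable (\<lambda>n. norm y ^ n)" using assms by simp
  then have "summable (\<lambda>n. y ^ n)"
    by (rule summable_comparison_test[rotated]) (auto intro: norm_power_ineq)
  then have "(\<lambda>n. (1 - y) * y ^ n) sums ((1 - y) * suminf (\<lambda>n. y ^ n))"
    by (intro sums_mult summable_sums)
  moreover have "(\<lambda>n. (- (y ^ Suc n)) - (- (y ^ n))) sums (0 - (- (y ^ 0)))"
    by (rule telescope_sums) (use assms in \<open>auto intro!: tendsto_eq_intros LIMSEQ_power_zero\<close>)
  moreover have "(\<lambda>n. (1 - y) * y ^ n) = (\<lambda>n. (- (y ^ Suc n)) - (- (y ^ n)))"
    by (auto simp: algebra_simps)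
  ultimately obtain z where z: "(1 - y) * z = 1"
    by (metis sums_unique2 power_0 diff_0 minus_minus)
  have "norm z \<le> norm (1::'a) + norm (y * z)"
    using norm_triangle_ineq[of 1 "y * z"] z by (simp add: algebra_simps)
  also have "\<dots> \<le> 1 + norm y * norm z" by (simp add: norm_mult_ineq)
  finally have "norm z * (1 - norm y) \<le> 1" by (simp add: algebra_simps)
  then have "norm z \<le> 1 / (1 - norm y)" using assms by (simp add: field_simps)
  with z that show ?thesis by blast
qed

lemma le_of_le_plus_tendsto_0:
  fixes a b :: real
  assumes "f \<longlonglongrightarrow> 0" "\<And>m. a \<le> b + f m"
  shows "a \<le> b"
proof -
  have "(\<lambda>m. b + f m) \<longlonglongrightarrow> b + 0" by (intro tendsto_intros assms(1))
  then show ?thesis using assms(2) by (intro LIMSEQ_le_const) auto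
qed

section \<open>Characters and automorphisms\<close>

lemma characterD:
  assumes "h \<in> characters j"
  shows "h (x + y) = h x + h y" "h (x * y) = h x * h y" "h (r *\<^sub>R x) = complex_of_real r * h x"
    "h 1 = 1" "h j = \<i>"
  using assms unfolding characters_def by auto

lemma character_diff: "h \<in> characters j \<Longrightarrow> h (x - y) = h x - h y"
  using characterD(1)[of h j "x - y" y] by (simp add: algebra_simps)

lemma character_cscale:
  assumes "h \<in> characters j"
  shows "h (cscale j c x) = c * h x"
proof -
  have "h (cscale j c x) = (complex_of_real (Re c) + \<i> * complex_of_real (Im c)) * h x"
    unfolding cscale_def by (simp add: characterD[OF assms] algebra_simps)
  then show ?thesis by (simp flip: complex_eq)
qed

lemma character_comp_hom:
  assumes "h \<in> characters j"
    and "\<And>x y. F (x + y) = F x + F y" "\<And>x y. F (x * y) = F x * F y"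
    and "\<And>r x. F (r *\<^sub>R x) = r *\<^sub>R F x" "F 1 = 1" "F j = j"
  shows "h \<circ> F \<in> characters j"
  using assms unfolding characters_def by auto

context complex_banach_alg
begin

lemma norm_character_le:
  assumes h: "h \<in> characters j"
  shows "cmod (h x) \<le> norm x"
proof (rule ccontr)
  assume "\<not> ?thesis"
  then have lt: "norm x < cmod (h x)" by simp
  then have nz: "h x \<noteq> 0" by auto
  define y where "y = cscale j (1 / h x) x"
  have "norm y = norm x / cmod (h x)"
    unfolding y_def cscale_eq_embed_complex_mult norm_embed_complex_mult by (simp add: norm_divide)
  also have "\<dots> < 1" using lt nz by (simp add: field_simps)
  finally obtain z where z: "(1 - y) * z = 1" using one_minus_right_inverse by blast
  have "h y = 1" unfolding y_def using character_cscale[OF h] nz by simp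
  then have "h ((1 - y) * z) = 0" using h by (simp add: characterD character_diff)
  with z characterD(4)[OF h] show False by simp
qed

end

lemma alg_automorphismD:
  assumes "alg_automorphism j U"
  shows "U (x + y) = U x + U y" "U (x * y) = U x * U y" "U (r *\<^sub>R x) = r *\<^sub>R U x"
    "U 1 = 1" "U j = j" "bij U"
  using assms linear_add[of U] linear_scale[of U] bounded_linear.linear[of U]
  unfolding alg_automorphism_def by auto

lemma alg_automorphism_inv:
  assumes "alg_automorphism j U"
  shows "inv U (x + y) = inv U x + inv U y" "inv U (x * y) = inv U x * inv U y"
    "inv U (r *\<^sub>R x) = r *\<^sub>R inv U x" "inv U 1 = 1" "inv U j = j"
proof -
  note U = alg_automorphismD[OF assms]
  have inv_eqI: "inv U y = x" if "U x = y" for x y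
    using U(6) that by (metis bij_inv_eq_iff)
  have U_inv: "U (inv U y) = y" for y
    using U(6) by (simp add: bij_is_surj surj_f_inv_f)
  show "inv U (x + y) = inv U x + inv U y" "inv U (x * y) = inv U x * inv U y"
    "inv U (r *\<^sub>R x) = r *\<^sub>R inv U x" "inv U 1 = 1" "inv U j = j"
    by (rule inv_eqI; simp add: U U_inv)+
qed

lemma character_comp_automorphism:
  "alg_automorphism j U \<Longrightarrow> h \<in> characters j \<Longrightarrow> h \<circ> U \<in> characters j"
  by (rule character_comp_hom) (simp_all add: alg_automorphismD)

lemma character_comp_inv_automorphism:
  "alg_automorphism j U \<Longrightarrow> h \<in> characters j \<Longrightarrow> h \<circ> inv U \<in> characters j"
  by (rule character_comp_hom) (simp_all add: alg_automorphism_inv)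

section \<open>Maximal ideals and the quotient seminorm\<close>

locale maximal_ideal_ring =
  fixes M :: "'a::comm_ring_1 set"
  assumes maximal: "maximal_ideal M"
begin

lemma ideal_0: "0 \<in> M"
  and ideal_add: "a \<in> M \<Longrightarrow> b \<in> M \<Longrightarrow> a + b \<in> M"
  and ideal_mult_left: "b \<in> M \<Longrightarrow> a * b \<in> M"
  and ideal_neq_UNIV: "M \<noteq> UNIV"
  using maximal unfolding maximal_ideal_def ring_ideal_def by auto

lemma ideal_mult_right: "a \<in> M \<Longrightarrow> a * b \<in> M"
  using ideal_mult_left[of a b] by (simp add: mult.commute)

lemma ideal_minus: "a \<in> M \<Longrightarrow> - a \<in> M"
  using ideal_mult_left[of a "-1"] by simp

lemma ideal_diff: "a \<in> M \<Longrightarrow> b \<in> M \<Longrightarrow> a - b \<in> M"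
  using ideal_add[of a "- b"] ideal_minus[of b] by simp

lemma ideal_sum: "(\<And>k. k \<in> S \<Longrightarrow> f k \<in> M) \<Longrightarrow> sum f S \<in> M"
  by (induction S rule: infinite_finite_induct) (auto intro: ideal_0 ideal_add)

lemma one_notin_ideal: "1 \<notin> M"
  using ideal_neq_UNIV ideal_mult_left[of 1] by (metis UNIV_eq_I mult.right_neutral)

lemma superideal_eq:
  assumes "ring_ideal J" "M \<subseteq> J" "1 \<notin> J"
  shows "J = M"
  using maximal assms unfolding maximal_ideal_def by blast

lemma inverse_mod_ideal:
  assumes "a \<notin> M"
  obtains b where "a * b - 1 \<in> M"
proof -
  define J where "J = {m + a * y | m y. m \<in> M}"
  have "ring_ideal J" unfolding ring_ideal_def J_def
  proof (intro conjI ballI allI)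
    show "0 \<in> {m + a * y |m y. m \<in> M}"
      using ideal_0 by (metis (mono_tags, lifting) add_0 mem_Collect_eq mult_zero_right)
  next
    fix u v assume "u \<in> {m + a * y |m y. m \<in> M}" "v \<in> {m + a * y |m y. m \<in> M}"
    then obtain m1 y1 m2 y2 where "u = m1 + a * y1" "v = m2 + a * y2" "m1 \<in> M" "m2 \<in> M" by blast
    then show "u + v \<in> {m + a * y |m y. m \<in> M}"
      by (intro CollectI exI[of _ "m1 + m2"] exI[of _ "y1 + y2"]) (auto simp: algebra_simps ideal_add)
  next
    fix b u assume "u \<in> {m + a * y |m y. m \<in> M}"
    then obtain m1 y1 where "u = m1 + a * y1" "m1 \<in> M" by blast
    then show "b * u \<in> {m + a * y |m y. m \<in> M}"
      by (intro CollectI exI[of _ "b * m1"] exI[of _ "b * y1"])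
        (auto simp: algebra_simps ideal_mult_left)
  qed
  moreover have "M \<subseteq> J" unfolding J_def by (force intro: exI[of _ 0])
  moreover have "a \<in> J - M" unfolding J_def using ideal_0 assms by (force intro: exI[of _ 1])
  ultimately have "1 \<in> J" using superideal_eq by blast
  then obtain m y where "1 = m + a * y" "m \<in> M" unfolding J_def by blast
  then have "a * y - 1 = - m" by (simp add: algebra_simps)
  with ideal_minus[OF \<open>m \<in> M\<close>] show ?thesis by (intro that[of y]) simp
qed

lemma ideal_prime:
  assumes "a * b \<in> M" "a \<notin> M"
  shows "b \<in> M"
proof -
  obtain y where y: "a * y - 1 \<in> M" using inverse_mod_ideal[OF assms(2)] by blast
  have "b = y * (a * b) - b * (a * y - 1)" by (simp add: algebra_simps)
  also have "\<dots> \<in> M" using ideal_diff[OF ideal_mult_left[OF assms(1)] ideal_mult_left[OF y]] .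
  finally show ?thesis .
qed

lemma power_notin_ideal: "a \<notin> M \<Longrightarrow> a ^ n \<notin> M"
  by (induction n) (use one_notin_ideal ideal_prime in auto)

end

locale banach_maximal_ideal = complex_banach_alg j + maximal_ideal_ring M
  for j :: "'a::{real_normed_algebra_1,banach,comm_ring_1}" and M :: "'a set"
begin

lemma norm_one_minus_ideal_ge: "m \<in> M \<Longrightarrow> 1 \<le> norm (1 - m)"
proof (rule ccontr)
  assume "m \<in> M" "\<not> 1 \<le> norm (1 - m)"
  then obtain z where "(1 - (1 - m)) * z = 1" using one_minus_right_inverse[of "1 - m"] by auto
  with \<open>m \<in> M\<close> ideal_mult_right[of m z] one_notin_ideal show False by simp
qed

text \<open>The closure of a proper ideal is a proper ideal, because the open unit ball around 1
  consists of invertible elements.\<close>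

lemma closed_ideal: "closed M"
proof -
  have "ring_ideal (closure M)" unfolding ring_ideal_def
  proof (intro conjI ballI allI)
    show "0 \<in> closure M" using ideal_0 closure_subset by blast
  next
    fix u v assume "u \<in> closure M" "v \<in> closure M"
    then obtain f g where "\<forall>n. f n \<in> M" "f \<longlonglongrightarrow> u" "\<forall>n. g n \<in> M" "g \<longlonglongrightarrow> v"
      unfolding closure_sequential by blast
    then show "u + v \<in> closure M"
      unfolding closure_sequential by (intro exI[of _ "\<lambda>n. f n + g n"]) (auto intro: tendsto_add ideal_add)
  next
    fix b u assume "u \<in> closure M"
    then obtain f where "\<forall>n. f n \<in> M" "f \<longlonglongrightarrow> u"
      unfolding closure_sequential by blast
    then show "b * u \<in> closure M"
      unfolding closure_sequential
      by (intro exI[of _ "\<lambda>n. b * f n"]) (auto intro: tendsto_mult tendsto_const ideal_mult_left)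
  qed
  moreover have "1 \<notin> closure M"
  proof
    assume "1 \<in> closure M"
    then obtain m where "m \<in> M" "dist m 1 < 1"
      unfolding closure_approachable using zero_less_one by blast
    with norm_one_minus_ideal_ge[of m] show False by (simp add: dist_norm norm_minus_commute)
  qed
  ultimately have "closure M = M" using superideal_eq closure_subset by blast
  then show ?thesis by (metis closed_closure)
qed

definition qnorm :: "'a \<Rightarrow> real" where
  "qnorm a = infdist a M"

lemma qnorm_nonneg: "0 \<le> qnorm a"
  unfolding qnorm_def by (rule infdist_nonneg)

lemma qnorm_le_norm_diff: "m \<in> M \<Longrightarrow> qnorm a \<le> norm (a - m)"
  unfolding qnorm_def using infdist_le[of m M a] by (simp add: dist_norm)

lemma qnorm_0 [simp]: "qnorm 0 = 0"
  unfolding qnorm_def using ideal_0 by simp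

lemma qnorm_le_norm: "qnorm a \<le> norm a"
  using qnorm_le_norm_diff[OF ideal_0] by simp

lemma qnorm_eq_0_iff: "qnorm a = 0 \<longleftrightarrow> a \<in> M"
  unfolding qnorm_def using in_closed_iff_infdist_zero[OF closed_ideal] ideal_0 by blast

lemma qnorm_approx:
  assumes "e > 0"
  obtains m where "m \<in> M" "norm (a - m) < qnorm a + e"
proof (rule ccontr)
  assume "\<not> thesis"
  with that have "\<forall>m\<in>M. qnorm a + e \<le> dist a m" by (metis dist_norm not_less)
  then have "qnorm a + e \<le> infdist a M"
    unfolding infdist_notempty[OF ex_in_conv[THEN iffD1, OF exI, OF ideal_0]]
    using ideal_0 by (intro cINF_greatest) auto
  with assms show False unfolding qnorm_def by simp
qed

lemma qnorm_cong_le: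
  assumes "a - b \<in> M"
  shows "qnorm a \<le> qnorm b"
proof (rule field_le_epsilon)
  fix e :: real assume "e > 0"
  then obtain m where "m \<in> M" "norm (b - m) < qnorm b + e" by (rule qnorm_approx)
  moreover have "m + (a - b) \<in> M" using ideal_add assms \<open>m \<in> M\<close> by blast
  ultimately show "qnorm a \<le> qnorm b + e" using qnorm_le_norm_diff[of "m + (a - b)" a] by simp
qed

lemma qnorm_cong: "a - b \<in> M \<Longrightarrow> qnorm a = qnorm b"
  using qnorm_cong_le[of a b] qnorm_cong_le[of b a] ideal_minus[of "a - b"] by (simp add: antisym)

lemma qnorm_minus: "qnorm (- a) = qnorm a"
proof -
  have "qnorm (- b) \<le> qnorm b" for b
  proof (rule field_le_epsilon)
    fix e :: real assume "e > 0"
    then obtain m where "m \<in> M" "norm (b - m) < qnorm b + e" by (rule qnorm_approx)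
    moreover have "qnorm (- b) \<le> norm (- b - (- m))"
      using ideal_minus \<open>m \<in> M\<close> by (intro qnorm_le_norm_diff)
    ultimately show "qnorm (- b) \<le> qnorm b + e" by (simp add: norm_minus_commute)
  qed
  from this[of a] this[of "- a"] show ?thesis by simp
qed

lemma qnorm_add: "qnorm (a + b) \<le> qnorm a + qnorm b"
proof (rule field_le_epsilon)
  fix e :: real assume "e > 0"
  then have "e / 2 > 0" by simp
  then obtain m1 m2 where m: "m1 \<in> M" "norm (a - m1) < qnorm a + e / 2"
      "m2 \<in> M" "norm (b - m2) < qnorm b + e / 2"
    by (metis qnorm_approx)
  then have "qnorm (a + b) \<le> norm ((a - m1) + (b - m2))"
    using qnorm_le_norm_diff[of "m1 + m2" "a + b"] ideal_add by (simp add: algebra_simps)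
  also have "\<dots> \<le> norm (a - m1) + norm (b - m2)" by (rule norm_triangle_ineq)
  finally show "qnorm (a + b) \<le> qnorm a + qnorm b + e" using m by simp
qed

lemma qnorm_triangle: "qnorm (a - c) \<le> qnorm (a - b) + qnorm (b - c)"
  using qnorm_add[of "a - b" "b - c"] by simp

lemma qnorm_diff_abs_le: "\<bar>qnorm a - qnorm b\<bar> \<le> qnorm (a - b)"
  using qnorm_add[of "a - b" b] qnorm_add[of "b - a" a] qnorm_minus[of "a - b"] by simp

lemma qnorm_sum: "qnorm (sum f S) \<le> (\<Sum>k\<in>S. qnorm (f k))"
proof (induction S rule: infinite_finite_induct)
  case (insert x F)
  then show ?case using qnorm_add[of "f x" "sum f F"] by simp
qed simp_all

lemma qnorm_mult: "qnorm (a * b) \<le> qnorm a * qnorm b"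
proof (rule field_le_epsilon)
  fix e :: real assume e: "e > 0"
  define d where "d = min 1 (e / (qnorm a + qnorm b + 1))"
  have pos: "0 < qnorm a + qnorm b + 1" using qnorm_nonneg[of a] qnorm_nonneg[of b] by simp
  have d: "d > 0" "d * (qnorm a + qnorm b + d) \<le> e"
  proof -
    show "d > 0" using e pos by (simp add: d_def)
    have "d * (qnorm a + qnorm b + d) \<le> d * (qnorm a + qnorm b + 1)"
      using \<open>d > 0\<close> by (intro mult_left_mono) (auto simp: d_def)
    also have "\<dots> \<le> e" using pos by (simp add: d_def min_mult_distrib_right le_divide_eq)
    finally show "d * (qnorm a + qnorm b + d) \<le> e" .
  qed
  obtain m1 m2 where m: "m1 \<in> M" "norm (a - m1) < qnorm a + d" "m2 \<in> M" "norm (b - m2) < qnorm b + d"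
    using qnorm_approx[OF d(1)] by metis
  have "a * b - (a - m1) * (b - m2) = m1 * b + a * m2 - m1 * m2" by (simp add: algebra_simps)
  also have "\<dots> \<in> M" using m by (intro ideal_diff ideal_add ideal_mult_left ideal_mult_right)
  finally have "qnorm (a * b) \<le> norm ((a - m1) * (b - m2))"
    using qnorm_le_norm_diff[of _ "a * b"] by fastforce
  also have "\<dots> \<le> norm (a - m1) * norm (b - m2)" by (rule norm_mult_ineq)
  also have "\<dots> \<le> (qnorm a + d) * (qnorm b + d)"
    using m by (intro mult_mono) (auto intro: less_imp_le order_trans[OF norm_ge_zero])
  also have "\<dots> \<le> qnorm a * qnorm b + e" using d by (simp add: algebra_simps)
  finally show "qnorm (a * b) \<le> qnorm a * qnorm b + e" .
qed

lemma qnorm_embed_complex_mult: "qnorm (embed_complex j c * a) \<le> cmod c * qnorm a"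
  using qnorm_mult[of "embed_complex j c" a] qnorm_le_norm[of "embed_complex j c"]
    norm_embed_complex[of c] qnorm_nonneg[of a]
  by (metis mult_right_mono order_trans)

lemma qnorm_one_ge: "1 \<le> qnorm 1"
proof (rule ccontr)
  assume "\<not> ?thesis"
  then obtain m where "m \<in> M" "norm (1 - m) < qnorm 1 + (1 - qnorm 1)"
    using qnorm_approx[of "1 - qnorm 1" 1] by auto
  with norm_one_minus_ideal_ge show False by fastforce
qed

text \<open>Completeness of the quotient: the increments are lifted to representatives of almost
  minimal norm, whose series converges absolutely in the Banach algebra.\<close>

lemma quotient_geometric_Cauchy_converges:
  assumes Z: "\<And>m. qnorm (Z (Suc m) - Z m) \<le> B * (1/2) ^ m"
  obtains L where "(\<lambda>m. qnorm (Z m - L)) \<longlonglongrightarrow> 0"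
proof -
  have "\<forall>k. \<exists>n\<in>M. norm ((Z (Suc k) - Z k) - n) < qnorm (Z (Suc k) - Z k) + (1/2) ^ k"
  proof
    fix k
    have "(1/2::real) ^ k > 0" by simp
    then show "\<exists>n\<in>M. norm ((Z (Suc k) - Z k) - n) < qnorm (Z (Suc k) - Z k) + (1/2) ^ k"
      by (rule qnorm_approx) blast
  qed
  then obtain n where n: "\<And>k. n k \<in> M"
    "\<And>k. norm ((Z (Suc k) - Z k) - n k) < qnorm (Z (Suc k) - Z k) + (1/2) ^ k"
    by metis
  define d where "d k = (Z (Suc k) - Z k) - n k" for k
  have d_bound: "norm (d k) \<le> (\<bar>B\<bar> + 1) * (1/2) ^ k" for k
  proof -
    have "norm (d k) \<le> B * (1/2) ^ k + (1/2) ^ k" using n(2)[of k] Z[of k] unfolding d_def by linarith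
    also have "\<dots> \<le> \<bar>B\<bar> * (1/2) ^ k + (1/2) ^ k" by (intro add_mono mult_right_mono) auto
    also have "\<dots> = (\<bar>B\<bar> + 1) * (1/2) ^ k" by (simp add: distrib_right)
    finally show ?thesis .
  qed
  have "summable (\<lambda>k. (\<bar>B\<bar> + 1) * (1/2::real) ^ k)"
    by (intro summable_mult summable_geometric) simp
  then have "summable d" using d_bound by (rule summable_comparison_test'[where N=0])
  then have "(\<lambda>m. (\<Sum>k<m. d k) - suminf d) \<longlonglongrightarrow> 0"
    by (intro LIM_zero summable_LIMSEQ)
  then have lim: "(\<lambda>m. norm ((\<Sum>k<m. d k) - suminf d)) \<longlonglongrightarrow> 0"
    by (rule tendsto_norm_zero)
  have "norm (qnorm (Z m - (Z 0 + suminf d))) \<le> norm ((\<Sum>k<m. d k) - suminf d)" for m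
  proof -
    have "(\<Sum>k<m. d k) = (\<Sum>k<m. Z (Suc k) - Z k) - (\<Sum>k<m. n k)"
      unfolding d_def by (simp add: sum_subtractf)
    also have "(\<Sum>k<m. Z (Suc k) - Z k) = Z m - Z 0" by (rule sum_lessThan_telescope)
    finally have "Z m - (Z 0 + suminf d) - ((\<Sum>k<m. d k) - suminf d) = (\<Sum>k<m. n k)"
      by simp
    then have "qnorm (Z m - (Z 0 + suminf d)) = qnorm ((\<Sum>k<m. d k) - suminf d)"
      using n(1) by (intro qnorm_cong) (simp add: ideal_sum)
    then show ?thesis using qnorm_le_norm qnorm_nonneg by simp
  qed
  then have "(\<lambda>m. qnorm (Z m - (Z 0 + suminf d))) \<longlonglongrightarrow> 0"
    by (intro Lim_null_comparison[OF always_eventually lim]) simp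
  then show ?thesis by (rule that)
qed

lemma qnorm_dyadic_mean_le:
  fixes f :: "nat \<Rightarrow> 'a"
  assumes "\<And>k. k < 2 ^ m \<Longrightarrow> qnorm (f k) \<le> B"
  shows "qnorm (embed_complex j (1 / 2 ^ m) * (\<Sum>k<2 ^ m. f k)) \<le> B"
proof -
  have "qnorm (embed_complex j (1 / 2 ^ m) * (\<Sum>k<2 ^ m. f k)) \<le> (1 / 2 ^ m) * (\<Sum>k<2 ^ m. qnorm (f k))"
    by (intro order_trans[OF qnorm_embed_complex_mult] mult_mono qnorm_sum)
      (auto simp: norm_divide norm_power qnorm_nonneg intro: sum_nonneg)
  also have "\<dots> \<le> (1 / 2 ^ m) * (\<Sum>k<(2::nat) ^ m. B)"
    using assms by (intro mult_left_mono sum_mono) auto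
  also have "(\<Sum>k<(2::nat) ^ m. B) = 2 ^ m * B" by simp
  finally show ?thesis by simp
qed

end

section \<open>The Gelfand--Mazur theorem modulo a maximal ideal\<close>

text \<open>Rickart's elementary argument. Assuming that \<open>x - c\<close> is invertible modulo M for every
  complex c, the averages of the resolvent over the 2^m-th roots of unity converge, modulo M, to an
  idempotent that is 1 at c = 0 and 0 for large c. This is impossible: the quotient norm of the
  idempotent takes only the values 0 and qnorm 1, which is at least 1, yet it depends continuously
  on c.\<close>

definition dyadic_root :: "nat \<Rightarrow> complex" where
  "dyadic_root m = cis (2 * pi / 2 ^ m)"

lemma dyadic_root_Suc_power_double: "dyadic_root (Suc m) ^ (2 * k) = dyadic_root m ^ k"
proof -
  have "dyadic_root (Suc m) ^ 2 = cis (real 2 * (2 * pi / 2 ^ Suc m))"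
    unfolding dyadic_root_def by (rule Complex.DeMoivre)
  also have "real 2 * (2 * pi / 2 ^ Suc m) = 2 * pi / 2 ^ m" by (simp add: field_simps)
  finally show ?thesis unfolding dyadic_root_def by (simp add: power_mult)
qed

lemma dyadic_root_Suc_power_half: "dyadic_root (Suc m) ^ (2 ^ m) = -1"
proof -
  have "dyadic_root (Suc m) ^ (2 ^ m) = cis (real (2 ^ m) * (2 * pi / 2 ^ Suc m))"
    unfolding dyadic_root_def by (rule Complex.DeMoivre)
  also have "real (2 ^ m) * (2 * pi / 2 ^ Suc m) = pi" by (simp add: field_simps)
  finally show ?thesis by simp
qed

lemma norm_dyadic_root [simp]: "cmod (dyadic_root m) = 1"
  unfolding dyadic_root_def by simp

lemma norm_dyadic_root_minus_1_le: "cmod (dyadic_root m - 1) \<le> 2 * pi / 2 ^ m"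
proof -
  have "cmod (dyadic_root m - 1) = 2 * \<bar>sin (2 * pi / 2 ^ m / 2)\<bar>"
    unfolding dyadic_root_def cis_conv_exp using dist_exp_i_1[of "2 * pi / 2 ^ m"] by simp
  also have "\<bar>sin (2 * pi / 2 ^ m / 2)\<bar> \<le> \<bar>2 * pi / 2 ^ m / 2\<bar>" by (rule abs_sin_x_le_abs_x)
  finally show ?thesis by simp
qed

lemma sum_lessThan_double: "(\<Sum>k<2 * n. f k) = (\<Sum>k<n. f (2 * k) + f (Suc (2 * k)))"
  by (induction n) (simp_all add: algebra_simps)

lemma power_two_power_Suc: "y ^ 2 ^ Suc m = y ^ 2 ^ m * y ^ 2 ^ m"
  for y :: "'b::monoid_mult"
  by (simp flip: power_add add: mult_2)

lemma (in banach_maximal_ideal) difference_of_squares_mean_mod: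
  assumes "(A - B) * P - A \<in> M" "(A + B) * P' - A \<in> M"
  shows "(A * A - B * B) * (embed_complex j (1 / 2) * (P + P')) - A * A \<in> M"
proof -
  have "(A * A - B * B) * (embed_complex j (1 / 2) * (P + P')) - A * A
      = embed_complex j (1 / 2) * ((A + B) * ((A - B) * P - A) + (A - B) * ((A + B) * P' - A))
        + (embed_complex j (1 / 2) * (A * A + A * A) - A * A)"
    by (simp add: algebra_simps)
  also have "embed_complex j (1 / 2) * (A * A + A * A) - A * A = 0"
    using embed_complex_half_double[of "A * A"] by simp
  finally show ?thesis
    using assms by (simp add: ideal_add ideal_mult_left)
qed

locale resolvent_mod = banach_maximal_ideal j M
  for j :: "'a::{real_normed_algebra_1,banach,comm_ring_1}" and M :: "'a set" +
  fixes x :: 'a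
  assumes no_value_mod: "\<And>c. x - embed_complex j c \<notin> M"
begin

definition res :: "complex \<Rightarrow> 'a" where
  "res c = (SOME y. (x - embed_complex j c) * y - 1 \<in> M)"

lemma res_inverse_mod: "(x - embed_complex j c) * res c - 1 \<in> M"
  unfolding res_def using inverse_mod_ideal[OF no_value_mod] by (rule someI_ex) blast

lemma res_unique_mod:
  assumes "(x - embed_complex j c) * y - 1 \<in> M"
  shows "res c - y \<in> M"
proof -
  have "res c - y = y * ((x - embed_complex j c) * res c - 1) - res c * ((x - embed_complex j c) * y - 1)"
    by (simp add: algebra_simps)
  also have "\<dots> \<in> M"
    using ideal_diff[OF ideal_mult_left[OF res_inverse_mod] ideal_mult_left[OF assms]] .
  finally show ?thesis .
qed

lemma resolvent_identity_mod: "res c - res d - embed_complex j (c - d) * res c * res d \<in> M"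
proof -
  have "res c - res d - embed_complex j (c - d) * res c * res d
      = res d * ((x - embed_complex j c) * res c - 1) - res c * ((x - embed_complex j d) * res d - 1)"
    by (simp add: embed_complex_diff algebra_simps)
  also have "\<dots> \<in> M"
    using ideal_diff[OF ideal_mult_left[OF res_inverse_mod] ideal_mult_left[OF res_inverse_mod]] .
  finally show ?thesis .
qed

lemma qnorm_res_diff: "qnorm (res c - res d) \<le> cmod (c - d) * qnorm (res c) * qnorm (res d)"
proof -
  have "qnorm (res c - res d) = qnorm (embed_complex j (c - d) * res c * res d)"
    using resolvent_identity_mod by (intro qnorm_cong) (simp add: algebra_simps)
  also have "\<dots> \<le> qnorm (embed_complex j (c - d) * res c) * qnorm (res d)" by (rule qnorm_mult)
  also have "\<dots> \<le> cmod (c - d) * qnorm (res c) * qnorm (res d)"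
    using qnorm_embed_complex_mult qnorm_nonneg by (intro mult_right_mono) auto
  finally show ?thesis .
qed

lemma qnorm_res_large:
  assumes "2 * norm x \<le> cmod c" "c \<noteq> 0"
  shows "qnorm (res c) \<le> 2 / cmod c"
proof -
  define y where "y = embed_complex j (1 / c) * x"
  have "norm y = norm x / cmod c"
    unfolding y_def norm_embed_complex_mult by (simp add: norm_divide)
  then have ny: "norm y \<le> 1/2" using assms by (simp add: pos_divide_le_eq)
  then obtain z where z: "(1 - y) * z = 1" "norm z \<le> 1 / (1 - norm y)"
    using one_minus_right_inverse[of y] by auto
  have "1 / (1 - norm y) \<le> 2" using ny by (simp add: divide_le_eq)
  with z(2) have nz: "norm z \<le> 2" by linarith
  have "x = embed_complex j c * y"
    unfolding y_def using embed_complex_mult_inverse[OF assms(2)] by (simp flip: mult.assoc)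
  moreover have "embed_complex j c * embed_complex j (- 1 / c) = - 1"
    using assms(2) by (simp flip: embed_complex_mult add: embed_complex_minus)
  ultimately have "(x - embed_complex j c) * (embed_complex j (- 1 / c) * z) = (1 - y) * z"
    by (simp add: algebra_simps)
  then have "qnorm (res c) = qnorm (embed_complex j (- 1 / c) * z)"
    using z(1) res_unique_mod by (intro qnorm_cong) (simp add: ideal_0)
  also have "\<dots> \<le> norm (embed_complex j (- 1 / c) * z)" by (rule qnorm_le_norm)
  also have "\<dots> = norm z / cmod c" unfolding norm_embed_complex_mult by (simp add: norm_divide)
  also have "\<dots> \<le> 2 / cmod c" using nz by (simp add: divide_right_mono)
  finally show ?thesis .
qed

lemma qnorm_res_local:
  assumes "cmod (c - d) * qnorm (res d) \<le> 1/2"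
  shows "qnorm (res c) \<le> 2 * qnorm (res d)"
proof -
  have "qnorm (res c) \<le> qnorm (res c - res d) + qnorm (res d)"
    using qnorm_add[of "res c - res d" "res d"] by simp
  also have "\<dots> \<le> (cmod (c - d) * qnorm (res d)) * qnorm (res c) + qnorm (res d)"
    using qnorm_res_diff by (simp add: mult_ac)
  also have "\<dots> \<le> 1/2 * qnorm (res c) + qnorm (res d)"
    using assms qnorm_nonneg by (intro add_right_mono mult_right_mono) auto
  finally show ?thesis by simp
qed

lemma continuous_on_qnorm_res: "continuous_on UNIV (\<lambda>c. qnorm (res c))"
  unfolding continuous_on_iff
proof (intro ballI allI impI)
  fix d :: complex and e :: real assume e: "e > 0"
  define K where "K = qnorm (res d) + 1"
  have K: "K > 0" "qnorm (res d) \<le> K" using qnorm_nonneg[of "res d"] by (auto simp: K_def)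
  define \<delta> where "\<delta> = min (1 / (2 * K)) (e / (4 * K * K))"
  have \<delta>: "\<delta> > 0" using K e by (simp add: \<delta>_def)
  show "\<exists>\<delta>>0. \<forall>c\<in>UNIV. dist c d < \<delta> \<longrightarrow> dist (qnorm (res c)) (qnorm (res d)) < e"
  proof (intro exI[of _ \<delta>] conjI ballI impI \<delta>)
    fix c :: complex assume "dist c d < \<delta>"
    then have cd: "cmod (c - d) < \<delta>" by (simp add: dist_norm)
    have "cmod (c - d) * qnorm (res d) \<le> \<delta> * K" using cd K qnorm_nonneg \<delta> by (intro mult_mono) auto
    also have "\<dots> \<le> 1 / (2 * K) * K" using K by (intro mult_right_mono) (auto simp: \<delta>_def)
    finally have "cmod (c - d) * qnorm (res d) \<le> 1/2" using K by simp
    from qnorm_res_local[OF this] have Rc: "qnorm (res c) \<le> 2 * K" using K by simp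
    have "dist (qnorm (res c)) (qnorm (res d)) \<le> qnorm (res c - res d)"
      using qnorm_diff_abs_le by (simp add: dist_real_def)
    also have "\<dots> \<le> cmod (c - d) * qnorm (res c) * qnorm (res d)" by (rule qnorm_res_diff)
    also have "\<dots> \<le> \<delta> * (2 * K) * K" using cd Rc K qnorm_nonneg \<delta>
      by (intro mult_mono) (auto intro: mult_nonneg_nonneg)
    also have "\<dots> \<le> e / (4 * K * K) * (2 * K) * K"
      using K by (intro mult_right_mono) (auto simp: \<delta>_def)
    also have "\<dots> = e / 2" using K by (simp add: field_simps)
    finally show "dist (qnorm (res c)) (qnorm (res d)) < e" using e by simp
  qed
qed

lemma qnorm_res_bounded:
  obtains C where "\<And>c. cmod c \<le> r \<Longrightarrow> qnorm (res c) \<le> C"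
proof -
  have "compact ((\<lambda>c. qnorm (res c)) ` cball 0 r)"
    by (rule compact_continuous_image) (use continuous_on_qnorm_res continuous_on_subset in auto)
  then obtain C where "\<forall>y\<in>(\<lambda>c. qnorm (res c)) ` cball 0 r. norm y \<le> C"
    using compact_imp_bounded bounded_iff by metis
  then show ?thesis by (intro that[of C]) (auto simp: abs_le_iff)
qed

text \<open>By partial fractions over the roots of unity, res_mean m c represents
  \<open>x\<^sup>n / (x\<^sup>n - c\<^sup>n)\<close> modulo M, where \<open>n = 2\<^sup>m\<close>.\<close>

definition res_mean :: "nat \<Rightarrow> complex \<Rightarrow> 'a" where
  "res_mean m c = embed_complex j (1 / 2 ^ m) * (\<Sum>k<2 ^ m. x * res (c * dyadic_root m ^ k))"

lemma res_mean_Suc: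
  "res_mean (Suc m) c = embed_complex j (1 / 2) * (res_mean m c + res_mean m (c * dyadic_root (Suc m)))"
proof -
  have "(\<Sum>k<2 ^ Suc m. x * res (c * dyadic_root (Suc m) ^ k))
      = (\<Sum>k<2 ^ m. x * res (c * dyadic_root m ^ k))
        + (\<Sum>k<2 ^ m. x * res (c * dyadic_root (Suc m) * dyadic_root m ^ k))"
    by (simp add: sum_lessThan_double sum.distrib dyadic_root_Suc_power_double mult.assoc)
  moreover have "embed_complex j (1 / 2 ^ Suc m) = embed_complex j (1 / 2) * embed_complex j (1 / 2 ^ m)"
    by (simp flip: embed_complex_mult)
  ultimately show ?thesis unfolding res_mean_def by (simp add: algebra_simps)
qed

lemma embed_complex_rotated_power:
  "embed_complex j ((c * dyadic_root (Suc m)) ^ 2 ^ m) = - embed_complex j (c ^ 2 ^ m)"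
  by (simp add: power_mult_distrib dyadic_root_Suc_power_half embed_complex_minus)

lemma res_mean_mod: "(x ^ 2 ^ m - embed_complex j (c ^ 2 ^ m)) * res_mean m c - x ^ 2 ^ m \<in> M"
proof (induction m arbitrary: c)
  case 0
  have "(x - embed_complex j c) * res_mean 0 c - x = x * ((x - embed_complex j c) * res c - 1)"
    unfolding res_mean_def by (simp add: algebra_simps)
  then show ?case using ideal_mult_left[OF res_inverse_mod] by simp
next
  case (Suc m)
  have "(x ^ 2 ^ m + embed_complex j (c ^ 2 ^ m)) * res_mean m (c * dyadic_root (Suc m)) - x ^ 2 ^ m \<in> M"
    using Suc.IH[of "c * dyadic_root (Suc m)"] by (simp add: embed_complex_rotated_power)
  with Suc.IH[of c] show ?case
    unfolding power_two_power_Suc[of x] power_two_power_Suc[of c] embed_complex_mult res_mean_Suc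
    by (rule difference_of_squares_mean_mod)
qed

lemma res_mean_Suc_mod_product:
  "res_mean (Suc m) c - res_mean m c * res_mean m (c * dyadic_root (Suc m)) \<in> M"
proof -
  define A B P P' Q where "A = x ^ 2 ^ m" and "B = embed_complex j (c ^ 2 ^ m)"
    and "P = res_mean m c" and "P' = res_mean m (c * dyadic_root (Suc m))"
    and "Q = res_mean (Suc m) c"
  have mod_P: "(A - B) * P - A \<in> M"
    using res_mean_mod[of m c] unfolding A_def B_def P_def .
  have mod_P': "(A + B) * P' - A \<in> M"
    using res_mean_mod[of m "c * dyadic_root (Suc m)"] unfolding A_def B_def P'_def
    by (simp add: embed_complex_rotated_power)
  have mod_Q: "(A * A - B * B) * Q - A * A \<in> M"
    using res_mean_mod[of "Suc m" c]
    unfolding A_def B_def Q_def power_two_power_Suc[of x] power_two_power_Suc[of c] embed_complex_mult .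
  have "(A * A - B * B) * (Q - P * P')
      = ((A * A - B * B) * Q - A * A) - (((A - B) * P - A) * ((A + B) * P') + A * ((A + B) * P' - A))"
    by (simp add: algebra_simps)
  also have "\<dots> \<in> M"
    using ideal_diff[OF mod_Q ideal_add[OF ideal_mult_right[OF mod_P] ideal_mult_left[OF mod_P']]] .
  finally have "(A * A - B * B) * (Q - P * P') \<in> M" .
  moreover have "A * A - B * B \<notin> M"
  proof
    assume "A * A - B * B \<in> M"
    from ideal_diff[OF ideal_mult_right[OF this, of Q] mod_Q] have "A * A \<in> M" by simp
    moreover have "x \<notin> M" using no_value_mod[of 0] by simp
    ultimately show False unfolding A_def using power_notin_ideal by (metis power_two_power_Suc)
  qed
  ultimately show ?thesis unfolding Q_def P_def P'_def by (rule ideal_prime)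
qed

lemma res_mean_0_mod: "res_mean m 0 - 1 \<in> M"
proof -
  have "res_mean m 0 = embed_complex j (1 / 2 ^ m) * (embed_complex j (2 ^ m) * (x * res 0))"
    unfolding res_mean_def using embed_complex_of_nat[of j "2 ^ m"] by simp
  also have "\<dots> = x * res 0" by (simp add: mult.assoc[symmetric] flip: embed_complex_mult)
  finally show ?thesis using res_inverse_mod[of 0] by simp
qed

lemma qnorm_res_mean_le:
  assumes "\<And>k. qnorm (res (c * dyadic_root m ^ k)) \<le> C"
  shows "qnorm (res_mean m c) \<le> norm x * C"
  unfolding res_mean_def
proof (rule qnorm_dyadic_mean_le)
  fix k
  have "qnorm (x * res (c * dyadic_root m ^ k)) \<le> qnorm x * qnorm (res (c * dyadic_root m ^ k))"
    by (rule qnorm_mult)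
  also have "\<dots> \<le> norm x * C" using assms qnorm_le_norm qnorm_nonneg by (intro mult_mono) auto
  finally show "qnorm (x * res (c * dyadic_root m ^ k)) \<le> norm x * C" .
qed

lemma qnorm_res_mean_diff_le:
  assumes "\<And>k. qnorm (res (c * dyadic_root m ^ k) - res (d * dyadic_root m ^ k)) \<le> D"
  shows "qnorm (res_mean m c - res_mean m d) \<le> norm x * D"
proof -
  have "res_mean m c - res_mean m d = embed_complex j (1 / 2 ^ m) *
      (\<Sum>k<2 ^ m. x * (res (c * dyadic_root m ^ k) - res (d * dyadic_root m ^ k)))"
    unfolding res_mean_def by (simp add: algebra_simps sum_subtractf)
  also have "qnorm \<dots> \<le> norm x * D"
  proof (rule qnorm_dyadic_mean_le)
    fix k
    have "qnorm (x * (res (c * dyadic_root m ^ k) - res (d * dyadic_root m ^ k)))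
        \<le> qnorm x * qnorm (res (c * dyadic_root m ^ k) - res (d * dyadic_root m ^ k))"
      by (rule qnorm_mult)
    also have "\<dots> \<le> norm x * D" using assms qnorm_le_norm qnorm_nonneg by (intro mult_mono) auto
    finally show "qnorm (x * (res (c * dyadic_root m ^ k) - res (d * dyadic_root m ^ k))) \<le> norm x * D" .
  qed
  finally show ?thesis .
qed

lemma qnorm_res_mean_decay:
  assumes "2 * norm x \<le> cmod c" "c \<noteq> 0"
  shows "qnorm (res_mean m c) \<le> norm x * (2 / cmod c)"
  using assms qnorm_res_large[of "c * dyadic_root m ^ k" for k]
  by (intro qnorm_res_mean_le) (simp add: norm_mult norm_power dyadic_root_def)

context
  fixes r C :: real
  assumes res_bound: "\<And>d. cmod d \<le> r \<Longrightarrow> qnorm (res d) \<le> C"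
begin

lemma qnorm_res_mean_bound: "cmod c \<le> r \<Longrightarrow> qnorm (res_mean m c) \<le> norm x * C"
  by (rule qnorm_res_mean_le) (simp add: res_bound norm_mult norm_power)

lemma qnorm_res_mean_lipschitz:
  assumes "cmod c \<le> r" "cmod d \<le> r"
  shows "qnorm (res_mean m c - res_mean m d) \<le> norm x * (C * C * cmod (c - d))"
proof (rule qnorm_res_mean_diff_le)
  fix k
  let ?c = "c * dyadic_root m ^ k" and ?d = "d * dyadic_root m ^ k"
  have n: "cmod ?c \<le> r" "cmod ?d \<le> r" "cmod (?c - ?d) = cmod (c - d)"
    using assms by (simp_all add: norm_mult norm_power flip: left_diff_distrib)
  have "qnorm (res ?c - res ?d) \<le> cmod (c - d) * qnorm (res ?c) * qnorm (res ?d)"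
    using qnorm_res_diff n(3) by metis
  also have "\<dots> \<le> cmod (c - d) * C * C"
  proof -
    have "0 \<le> C" using res_bound[OF n(1)] qnorm_nonneg[of "res ?c"] by linarith
    then show ?thesis using res_bound n qnorm_nonneg by (intro mult_mono) auto
  qed
  finally show "qnorm (res ?c - res ?d) \<le> C * C * cmod (c - d)" by (simp add: mult_ac)
qed

lemma qnorm_res_mean_rotate:
  assumes "cmod c \<le> r"
  shows "qnorm (res_mean m (c * dyadic_root (Suc m)) - res_mean m c) \<le> norm x * C * C * r * pi * (1/2) ^ m"
proof -
  have "cmod (c * dyadic_root (Suc m) - c) = cmod c * cmod (dyadic_root (Suc m) - 1)"
    by (metis mult.right_neutral norm_mult right_diff_distrib)
  also have "\<dots> \<le> r * (2 * pi / 2 ^ Suc m)"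
    using assms norm_dyadic_root_minus_1_le[of "Suc m"] order_trans[OF norm_ge_zero assms]
    by (intro mult_mono) simp_all
  also have "\<dots> = r * pi * (1/2) ^ m" by (simp add: field_simps)
  finally have "norm x * (C * C * cmod (c * dyadic_root (Suc m) - c)) \<le> norm x * (C * C * (r * pi * (1/2) ^ m))"
    by (intro mult_left_mono) auto
  moreover have "qnorm (res_mean m (c * dyadic_root (Suc m)) - res_mean m c)
      \<le> norm x * (C * C * cmod (c * dyadic_root (Suc m) - c))"
    using assms by (intro qnorm_res_mean_lipschitz) (simp_all add: norm_mult)
  ultimately show ?thesis by (simp add: mult_ac)
qed

lemma qnorm_res_mean_Suc_diff:
  assumes "cmod c \<le> r"
  shows "qnorm (res_mean (Suc m) c - res_mean m c) \<le> norm x * C * C * r * pi * (1/2) ^ m"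
proof -
  have half: "res_mean (Suc m) c - res_mean m c
      = embed_complex j (1 / 2) * (res_mean m (c * dyadic_root (Suc m)) - res_mean m c)"
    using embed_complex_half_double[of "res_mean m c"] unfolding res_mean_Suc
    by (simp add: algebra_simps)
  have "qnorm (res_mean (Suc m) c - res_mean m c)
      \<le> cmod (1 / 2) * qnorm (res_mean m (c * dyadic_root (Suc m)) - res_mean m c)"
    unfolding half by (rule qnorm_embed_complex_mult)
  also have "\<dots> \<le> qnorm (res_mean m (c * dyadic_root (Suc m)) - res_mean m c)"
    using qnorm_nonneg by simp
  finally show ?thesis using qnorm_res_mean_rotate[OF assms, of m] by linarith
qed

lemma res_mean_converges: "cmod c \<le> r \<Longrightarrow> \<exists>L. (\<lambda>m. qnorm (res_mean m c - L)) \<longlonglongrightarrow> 0"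
  using quotient_geometric_Cauchy_converges qnorm_res_mean_Suc_diff by metis

end

definition res_limit :: "complex \<Rightarrow> 'a" where
  "res_limit c = (SOME L. (\<lambda>m. qnorm (res_mean m c - L)) \<longlonglongrightarrow> 0)"

lemma res_mean_tendsto_res_limit: "(\<lambda>m. qnorm (res_mean m c - res_limit c)) \<longlonglongrightarrow> 0"
proof -
  obtain C where "\<And>d. cmod d \<le> cmod c \<Longrightarrow> qnorm (res d) \<le> C"
    by (rule qnorm_res_bounded[of "cmod c"]) blast
  then have "\<exists>L. (\<lambda>m. qnorm (res_mean m c - L)) \<longlonglongrightarrow> 0"
    using res_mean_converges[of "cmod c" C c] by blast
  then show ?thesis unfolding res_limit_def by (rule someI_ex)
qed

context
  fixes r C :: real
  assumes res_bound: "\<And>d. cmod d \<le> r \<Longrightarrow> qnorm (res d) \<le> C"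
begin

lemma qnorm_res_limit_lipschitz:
  assumes "cmod c \<le> r" "cmod d \<le> r"
  shows "qnorm (res_limit c - res_limit d) \<le> norm x * (C * C * cmod (c - d))"
proof (rule le_of_le_plus_tendsto_0)
  show "(\<lambda>m. qnorm (res_mean m c - res_limit c) + qnorm (res_mean m d - res_limit d)) \<longlonglongrightarrow> 0"
    using tendsto_add[OF res_mean_tendsto_res_limit res_mean_tendsto_res_limit] by simp
  fix m
  have "qnorm (res_limit c - res_limit d)
      \<le> qnorm (res_limit c - res_mean m c) + qnorm (res_mean m c - res_limit d)"
    by (rule qnorm_triangle)
  also have "qnorm (res_mean m c - res_limit d)
      \<le> qnorm (res_mean m c - res_mean m d) + qnorm (res_mean m d - res_limit d)"
    by (rule qnorm_triangle)
  also have "qnorm (res_mean m c - res_mean m d) \<le> norm x * (C * C * cmod (c - d))"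
    using res_bound assms by (rule qnorm_res_mean_lipschitz)
  also have "qnorm (res_limit c - res_mean m c) = qnorm (res_mean m c - res_limit c)"
    using qnorm_minus[of "res_mean m c - res_limit c"] by simp
  finally show "qnorm (res_limit c - res_limit d) \<le> norm x * (C * C * cmod (c - d))
      + (qnorm (res_mean m c - res_limit c) + qnorm (res_mean m d - res_limit d))"
    by simp
qed

lemma continuous_on_qnorm_res_limit: "continuous_on (cball 0 r) (\<lambda>c. qnorm (res_limit c))"
proof (rule lipschitz_on_continuous_on[OF lipschitz_onI])
  fix c d :: complex assume "c \<in> cball 0 r" "d \<in> cball 0 r"
  then have "qnorm (res_limit c - res_limit d) \<le> norm x * (C * C) * dist c d"
    using qnorm_res_limit_lipschitz[of c d] by (simp add: dist_norm mult_ac)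
  then show "dist (qnorm (res_limit c)) (qnorm (res_limit d)) \<le> norm x * (C * C) * dist c d"
    using qnorm_diff_abs_le[of "res_limit c" "res_limit d"] by (simp add: dist_real_def)
qed simp

text \<open>The limit is idempotent modulo M because res_mean (Suc m) c is the product of two
  averages over the 2^m-th roots of unity that approach each other.\<close>

lemma res_limit_idempotent_mod:
  assumes c: "cmod c \<le> r"
  shows "res_limit c - res_limit c * res_limit c \<in> M"
proof -
  define L Z Z' a where "L = res_limit c" and "Z m = res_mean m c"
    and "Z' m = res_mean m (c * dyadic_root (Suc m))" and "a m = qnorm (Z m - L)" for m
  define R where "R m = norm x * C * C * r * pi * (1/2) ^ m" for m
  have a: "a \<longlonglongrightarrow> 0" unfolding a_def Z_def L_def by (rule res_mean_tendsto_res_limit)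
  have product: "qnorm (Z m * Z' m - L * L) \<le> (norm x * C) * (R m + a m) + a m * qnorm L" for m
  proof -
    have "Z m * Z' m - L * L = Z m * (Z' m - L) + (Z m - L) * L" by (simp add: algebra_simps)
    then have "qnorm (Z m * Z' m - L * L) \<le> qnorm (Z m * (Z' m - L)) + qnorm ((Z m - L) * L)"
      using qnorm_add by simp
    also have "qnorm ((Z m - L) * L) \<le> a m * qnorm L" unfolding a_def by (rule qnorm_mult)
    also have "qnorm (Z m * (Z' m - L)) \<le> qnorm (Z m) * qnorm (Z' m - L)" by (rule qnorm_mult)
    also have "qnorm (Z m) * qnorm (Z' m - L) \<le> (norm x * C) * (R m + a m)"
    proof (rule mult_mono)
      show "qnorm (Z m) \<le> norm x * C" unfolding Z_def using res_bound c by (rule qnorm_res_mean_bound)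
      have "qnorm (Z' m - L) \<le> qnorm (Z' m - Z m) + qnorm (Z m - L)" by (rule qnorm_triangle)
      then show "qnorm (Z' m - L) \<le> R m + a m"
        using qnorm_res_mean_rotate[OF res_bound c, of m] unfolding a_def R_def Z_def Z'_def by simp
      show "0 \<le> norm x * C" using res_bound[OF c] qnorm_nonneg[of "res c"] by simp
    qed (rule qnorm_nonneg)
    finally show ?thesis by simp
  qed
  have "qnorm (L - L * L) \<le> 0"
  proof (rule le_of_le_plus_tendsto_0)
    have "(\<lambda>m. (1/2::real) ^ m) \<longlonglongrightarrow> 0" by (rule LIMSEQ_power_zero) simp
    then have "(\<lambda>m. R m) \<longlonglongrightarrow> 0" unfolding R_def by (intro tendsto_mult_right_zero)
    then show "(\<lambda>m. a (Suc m) + ((norm x * C) * (R m + a m) + a m * qnorm L)) \<longlonglongrightarrow> 0"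
      using LIMSEQ_Suc[OF a] a by (auto intro!: tendsto_add_zero tendsto_mult_right_zero
        tendsto_mult_left_zero)
    fix m
    have "qnorm (L - L * L) \<le> qnorm (L - Z (Suc m)) + qnorm (Z (Suc m) - L * L)"
      by (rule qnorm_triangle)
    also have "qnorm (Z (Suc m) - L * L) \<le> qnorm (Z (Suc m) - Z m * Z' m) + qnorm (Z m * Z' m - L * L)"
      by (rule qnorm_triangle)
    also have "qnorm (Z (Suc m) - Z m * Z' m) = 0"
      unfolding Z_def Z'_def qnorm_eq_0_iff by (rule res_mean_Suc_mod_product)
    also have "qnorm (L - Z (Suc m)) = a (Suc m)"
      unfolding a_def using qnorm_minus[of "Z (Suc m) - L"] by simp
    finally show "qnorm (L - L * L) \<le> 0 + (a (Suc m) + ((norm x * C) * (R m + a m) + a m * qnorm L))"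
      using product[of m] by simp
  qed
  then show ?thesis unfolding L_def using qnorm_nonneg qnorm_eq_0_iff by (metis order_antisym)
qed

end

lemma qnorm_res_limit_cases: "qnorm (res_limit c) = 0 \<or> qnorm (res_limit c) = qnorm 1"
proof -
  obtain C where C: "\<And>d. cmod d \<le> cmod c \<Longrightarrow> qnorm (res d) \<le> C"
    by (rule qnorm_res_bounded[of "cmod c"]) blast
  have "res_limit c * (1 - res_limit c) \<in> M"
    using res_limit_idempotent_mod[OF C order_refl] by (simp add: algebra_simps)
  then have "res_limit c \<in> M \<or> 1 - res_limit c \<in> M" using ideal_prime by blast
  then show ?thesis
  proof
    assume "1 - res_limit c \<in> M"
    then have "res_limit c - 1 \<in> M" using ideal_minus by fastforce
    then show ?thesis using qnorm_cong by blast
  qed (simp add: qnorm_eq_0_iff)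
qed

lemma qnorm_res_limit_0: "qnorm (res_limit 0) = qnorm 1"
proof -
  have "qnorm (res_mean m 0 - res_limit 0) = qnorm (1 - res_limit 0)" for m
    using res_mean_0_mod[of m] by (intro qnorm_cong) simp
  then have "(\<lambda>m. qnorm (1 - res_limit 0)) \<longlonglongrightarrow> 0"
    using res_mean_tendsto_res_limit[of 0] by simp
  then have "1 - res_limit 0 \<in> M" by (simp add: LIMSEQ_const_iff qnorm_eq_0_iff)
  then have "res_limit 0 - 1 \<in> M" using ideal_minus by fastforce
  then show ?thesis by (rule qnorm_cong)
qed

lemma qnorm_res_limit_far:
  assumes "2 * norm x < cmod c"
  shows "qnorm (res_limit c) = 0"
proof -
  have "qnorm (res_limit c) \<le> norm x * (2 / cmod c)"
  proof (rule le_of_le_plus_tendsto_0[OF res_mean_tendsto_res_limit])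
    fix m
    have "qnorm (res_limit c) \<le> qnorm (res_limit c - res_mean m c) + qnorm (res_mean m c)"
      using qnorm_add[of "res_limit c - res_mean m c" "res_mean m c"] by simp
    also have "qnorm (res_mean m c) \<le> norm x * (2 / cmod c)"
      using assms by (intro qnorm_res_mean_decay) auto
    also have "qnorm (res_limit c - res_mean m c) = qnorm (res_mean m c - res_limit c)"
      using qnorm_minus[of "res_mean m c - res_limit c"] by simp
    finally show "qnorm (res_limit c) \<le> norm x * (2 / cmod c) + qnorm (res_mean m c - res_limit c)"
      by simp
  qed
  also have "\<dots> < 1"
  proof -
    have "0 < cmod c" using assms norm_ge_zero[of x] by linarith
    then show ?thesis using assms by (simp add: pos_divide_less_eq)
  qed
  finally show ?thesis using qnorm_res_limit_cases[of c] qnorm_one_ge by auto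
qed

lemma resolvent_mod_absurd: False
proof -
  define r where "r = 2 * norm x + 1"
  have r: "0 < r" "2 * norm x < r" unfolding r_def by (simp_all add: add_nonneg_pos)
  obtain C where C: "\<And>d. cmod d \<le> r \<Longrightarrow> qnorm (res d) \<le> C"
    by (rule qnorm_res_bounded[of r]) blast
  have "continuous_on {0..r} (\<lambda>\<rho>. qnorm (res_limit (complex_of_real \<rho>)))"
    by (rule continuous_on_compose2[OF continuous_on_qnorm_res_limit[OF C] continuous_on_of_real])
      auto
  moreover have "qnorm (res_limit (complex_of_real r)) = 0"
    using r by (intro qnorm_res_limit_far) simp
  moreover have "1/2 \<le> qnorm (res_limit (complex_of_real 0))"
    using qnorm_res_limit_0 qnorm_one_ge by simp
  ultimately obtain \<rho> where "qnorm (res_limit (complex_of_real \<rho>)) = 1/2"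
    using IVT2'[of "\<lambda>\<rho>. qnorm (res_limit (complex_of_real \<rho>))" r "1/2" 0] r by auto
  then show False using qnorm_res_limit_cases[of "complex_of_real \<rho>"] qnorm_one_ge by auto
qed

end

context banach_maximal_ideal
begin

lemma gelfand_mazur_mod: "\<exists>c. a - embed_complex j c \<in> M"
proof (rule ccontr)
  assume "\<nexists>c. a - embed_complex j c \<in> M"
  then interpret resolvent_mod j M a by unfold_locales auto
  show False by (rule resolvent_mod_absurd)
qed

definition ideal_character :: "'a \<Rightarrow> complex" where
  "ideal_character a = (SOME c. a - embed_complex j c \<in> M)"

lemma ideal_character_mod: "a - embed_complex j (ideal_character a) \<in> M"
  unfolding ideal_character_def using gelfand_mazur_mod by (rule someI_ex)

lemma ideal_character_unique:
  assumes "a - embed_complex j c \<in> M"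
  shows "ideal_character a = c"
proof (rule ccontr)
  assume ne: "ideal_character a \<noteq> c"
  define d where "d = c - ideal_character a"
  have "embed_complex j d = (a - embed_complex j (ideal_character a)) - (a - embed_complex j c)"
    unfolding d_def by (simp add: embed_complex_diff)
  also have "\<dots> \<in> M" using ideal_character_mod assms by (rule ideal_diff)
  finally have "embed_complex j d * embed_complex j (1 / d) \<in> M" by (rule ideal_mult_right)
  with ne embed_complex_mult_inverse one_notin_ideal show False by (simp add: d_def)
qed

lemma ideal_character_in_characters: "ideal_character \<in> characters j"
  unfolding characters_def
proof (intro CollectI conjI allI)
  fix a b
  show "ideal_character (a + b) = ideal_character a + ideal_character b"
    using ideal_add[OF ideal_character_mod[of a] ideal_character_mod[of b]]
    by (intro ideal_character_unique) (simp add: embed_complex_add algebra_simps)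
  have "a * b - embed_complex j (ideal_character a * ideal_character b)
      = (a - embed_complex j (ideal_character a)) * b
        + embed_complex j (ideal_character a) * (b - embed_complex j (ideal_character b))"
    by (simp add: embed_complex_mult algebra_simps)
  also have "\<dots> \<in> M"
    using ideal_add[OF ideal_mult_right[OF ideal_character_mod] ideal_mult_left[OF ideal_character_mod]] .
  finally show "ideal_character (a * b) = ideal_character a * ideal_character b"
    by (rule ideal_character_unique)
next
  fix r :: real and a
  have "r *\<^sub>R a - embed_complex j (complex_of_real r * ideal_character a)
      = embed_complex j (complex_of_real r) * (a - embed_complex j (ideal_character a))"
    by (simp add: embed_complex_mult algebra_simps embed_complex_of_real)
  also have "\<dots> \<in> M" by (rule ideal_mult_left[OF ideal_character_mod])
  finally show "ideal_character (r *\<^sub>R a) = complex_of_real r * ideal_character a"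
    by (rule ideal_character_unique)
next
  show "ideal_character 1 = 1" "ideal_character j = \<i>"
    by (simp_all add: ideal_character_unique ideal_0)
qed

end

section \<open>The maximal ideal space and its Shilov boundary\<close>

text \<open>Semisimplicity is used only to produce a maximal ideal: the intersection of the empty
  family of ideals would be the whole algebra.\<close>

lemma (in complex_banach_alg) characters_nonempty:
  assumes "semisimple TYPE('a)"
  shows "characters j \<noteq> {}"
proof -
  have "{I :: 'a set. maximal_ideal I} \<noteq> {}"
    using assms unfolding semisimple_def by (metis Inter_empty UNIV_I singletonD zero_neq_one)
  then obtain M :: "'a set" where "maximal_ideal M" by blast
  then interpret banach_maximal_ideal j M by unfold_locales
  show ?thesis using ideal_character_in_characters by blast
qed

abbreviation pointwise_topology :: "('a \<Rightarrow> complex) topology" where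
  "pointwise_topology \<equiv> product_topology (\<lambda>_. euclidean) UNIV"

lemma continuous_map_evaluation: "continuous_map pointwise_topology euclidean (\<lambda>h. h a)"
  using continuous_map_product_projection[of a UNIV "\<lambda>_. euclidean"] by simp

lemma continuous_map_complex_mult:
  fixes f g :: "'b \<Rightarrow> complex"
  shows "continuous_map X euclidean f \<Longrightarrow> continuous_map X euclidean g
    \<Longrightarrow> continuous_map X euclidean (\<lambda>x. f x * g x)"
  by (simp add: continuous_map_atin tendsto_mult)

lemma closedin_pointwise_eq:
  fixes F G :: "('a \<Rightarrow> complex) \<Rightarrow> complex"
  assumes "continuous_map pointwise_topology euclidean F" "continuous_map pointwise_topology euclidean G"
  shows "closedin pointwise_topology {h. F h = G h}"
  using closedin_continuous_maps_eq[OF _ assms] by (simp add: topspace_product_topology)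

lemma closedin_characters: "closedin pointwise_topology (characters j)"
proof -
  have "characters j = (\<Inter>x. \<Inter>y. {h. h (x + y) = h x + h y})
      \<inter> (\<Inter>x. \<Inter>y. {h. h (x * y) = h x * h y})
      \<inter> (\<Inter>r. \<Inter>x. {h. h (r *\<^sub>R x) = complex_of_real r * h x})
      \<inter> {h. h 1 = 1} \<inter> {h. h j = \<i>}"
    unfolding characters_def by auto
  also have "closedin pointwise_topology \<dots>"
    by (intro closedin_Int closedin_INT closedin_pointwise_eq continuous_map_add
        continuous_map_complex_mult continuous_map_evaluation continuous_map_canonical_const) auto
  finally show ?thesis .
qed

lemma topspace_gelfand_top: "topspace (gelfand_top j) = characters j"
  unfolding gelfand_top_def by (simp add: topspace_product_topology)

context complex_banach_alg
begin

lemma compactin_characters: "compactin pointwise_topology (characters j)"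
proof (rule closed_compactin[OF _ _ closedin_characters])
  show "compactin pointwise_topology (PiE UNIV (\<lambda>a. cball 0 (norm a)))"
    by (simp add: compactin_PiE)
  show "characters j \<subseteq> PiE UNIV (\<lambda>a. cball 0 (norm a))"
    using norm_character_le by (auto simp: PiE_UNIV_domain)
qed

lemma characters_is_boundary:
  assumes "semisimple TYPE('a)"
  shows "is_boundary j (characters j)"
  unfolding is_boundary_def
proof (intro conjI allI)
  fix f :: 'a
  have "compactin euclidean ((\<lambda>h. cmod (h f)) ` characters j)"
    by (rule image_compactin[OF compactin_characters]) (intro continuous_map_norm continuous_map_evaluation)
  moreover have "(\<lambda>h. cmod (h f)) ` characters j \<noteq> {}" using characters_nonempty[OF assms] by simp
  ultimately obtain s where "s \<in> (\<lambda>h. cmod (h f)) ` characters j"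
      "\<forall>t\<in>(\<lambda>h. cmod (h f)) ` characters j. t \<le> s"
    using compact_attains_sup by (metis compactin_euclidean_iff)
  then show "\<exists>m\<in>characters j. \<forall>m'\<in>characters j. cmod (m' f) \<le> cmod (m f)" by auto
qed simp

lemma shilov_boundary_subset_characters:
  assumes "semisimple TYPE('a)"
  shows "shilov_boundary j \<subseteq> characters j"
proof -
  have "closedin (gelfand_top j) (characters j)"
    unfolding gelfand_top_def by (simp add: closedin_subtopology_refl topspace_product_topology)
  then show ?thesis unfolding shilov_boundary_def using characters_is_boundary[OF assms] by blast
qed

end

lemma continuous_map_gelfand_comp:
  assumes "\<And>h. h \<in> characters j \<Longrightarrow> h \<circ> F \<in> characters j"
  shows "continuous_map (gelfand_top j) (gelfand_top j) (\<lambda>h. h \<circ> F)"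
  unfolding gelfand_top_def continuous_map_in_subtopology
proof
  show "continuous_map (subtopology pointwise_topology (characters j)) pointwise_topology (\<lambda>h. h \<circ> F)"
    by (rule continuous_map_from_subtopology)
      (auto simp: continuous_map_componentwise_UNIV o_def intro: continuous_map_product_projection)
  show "(\<lambda>h. h \<circ> F) \<in> topspace (subtopology pointwise_topology (characters j)) \<rightarrow> characters j"
    using assms by (auto simp: topspace_product_topology)
qed

lemma is_boundary_preimage_automorphism:
  assumes U: "alg_automorphism j U" and B: "is_boundary j B"
  shows "is_boundary j {h \<in> characters j. h \<circ> U \<in> B}"
  unfolding is_boundary_def
proof (intro conjI allI)
  fix f
  obtain m where m: "m \<in> B" and max: "\<forall>m'\<in>characters j. cmod (m' (inv U f)) \<le> cmod (m (inv U f))"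
    using B unfolding is_boundary_def by blast
  have "m \<in> characters j" using m B unfolding is_boundary_def by auto
  then have "m \<circ> inv U \<in> {h \<in> characters j. h \<circ> U \<in> B}"
    using character_comp_inv_automorphism[OF U] m alg_automorphismD(6)[OF U]
    by (simp add: o_assoc[symmetric] bij_is_inj)
  moreover have "\<forall>m'\<in>characters j. cmod (m' f) \<le> cmod ((m \<circ> inv U) f)"
    using max character_comp_automorphism[OF U] alg_automorphismD(6)[OF U]
    by (metis bij_inv_eq_iff comp_apply)
  ultimately show "\<exists>m\<in>{h \<in> characters j. h \<circ> U \<in> B}. \<forall>m'\<in>characters j. cmod (m' f) \<le> cmod (m f)"
    by blast
qed auto

lemma shilov_boundary_comp_automorphism:
  assumes U: "alg_automorphism j U" and t: "t \<in> shilov_boundary j"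
  shows "t \<circ> U \<in> shilov_boundary j"
  unfolding shilov_boundary_def
proof (rule InterI)
  fix B assume "B \<in> {B. closedin (gelfand_top j) B \<and> is_boundary j B}"
  then have closed: "closedin (gelfand_top j) B" and B: "is_boundary j B" by auto
  have "continuous_map (gelfand_top j) (gelfand_top j) (\<lambda>h. h \<circ> U)"
    by (rule continuous_map_gelfand_comp) (rule character_comp_automorphism[OF U])
  from closedin_continuous_map_preimage[OF this closed]
  have "closedin (gelfand_top j) {h \<in> characters j. h \<circ> U \<in> B}"
    unfolding topspace_gelfand_top .
  with t is_boundary_preimage_automorphism[OF U B] show "t \<circ> U \<in> B"
    unfolding shilov_boundary_def by blast
qed

lemma norm_le_sup_norm:
  "bdd_above ((\<lambda>t. cmod (g t)) ` S) \<Longrightarrow> t \<in> S \<Longrightarrow> cmod (g t) \<le> sup_norm S g"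
  unfolding sup_norm_def by (rule cSUP_upper)

lemma sup_norm_le: "S \<noteq> {} \<Longrightarrow> (\<And>t. t \<in> S \<Longrightarrow> cmod (g t) \<le> B) \<Longrightarrow> sup_norm S g \<le> B"
  unfolding sup_norm_def by (rule cSUP_least)

lemma sup_norm_normalize:
  assumes "S \<noteq> {}" "\<And>t. t \<in> S \<Longrightarrow> cmod (g t) \<le> s" "sup_norm S g = s" "s > 0"
  shows "sup_norm S (\<lambda>t. complex_of_real (1 / s) * g t) = 1"
proof (rule antisym)
  have norm_eq: "cmod (complex_of_real (1 / s) * g t) = cmod (g t) / s" for t
    using assms(4) by (simp add: norm_mult norm_divide)
  show "sup_norm S (\<lambda>t. complex_of_real (1 / s) * g t) \<le> 1"
  proof (rule sup_norm_le[OF assms(1)])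
    fix t assume "t \<in> S"
    then show "cmod (complex_of_real (1 / s) * g t) \<le> 1"
      unfolding norm_eq using assms(2,4) by (simp add: pos_divide_le_eq)
  qed
  have bdd: "bdd_above ((\<lambda>t. cmod (complex_of_real (1 / s) * g t)) ` S)"
    unfolding norm_eq using assms(2,4) by (intro bdd_aboveI2[where M=1]) (simp add: pos_divide_le_eq)
  have "cmod (g t) \<le> s * sup_norm S (\<lambda>t. complex_of_real (1 / s) * g t)" if "t \<in> S" for t
  proof -
    have "cmod (g t) / s \<le> sup_norm S (\<lambda>t. complex_of_real (1 / s) * g t)"
      using norm_le_sup_norm[OF bdd that] by (simp only: norm_eq)
    then show ?thesis by (metis assms(4) mult.commute pos_divide_le_eq)
  qed
  then have "s \<le> s * sup_norm S (\<lambda>t. complex_of_real (1 / s) * g t)"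
    using sup_norm_le[OF assms(1)] assms(3) by metis
  then show "1 \<le> sup_norm S (\<lambda>t. complex_of_real (1 / s) * g t)" using assms(4) by simp
qed

section \<open>The weighted composition operator on the check algebra\<close>

definition check_transform ::
    "'a::{real_normed_algebra_1,comm_ring_1} \<Rightarrow> 'a \<Rightarrow> ('a \<Rightarrow> complex) \<Rightarrow> complex" where
  "check_transform j f = (\<lambda>t. if t \<in> shilov_boundary j then t f else 0)"

locale check_algebra_setting = complex_banach_alg j
  for j :: "'a::{real_normed_algebra_1,banach,comm_ring_1}" +
  fixes w :: 'a and U :: "'a \<Rightarrow> 'a"
  assumes semisimple: "semisimple TYPE('a)"
    and automorphism: "alg_automorphism j U"
begin

abbreviation S where "S \<equiv> shilov_boundary j"

abbreviation X where "X \<equiv> check_algebra j"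

definition shifted_op ::
    "complex \<Rightarrow> (('a \<Rightarrow> complex) \<Rightarrow> complex) \<Rightarrow> ('a \<Rightarrow> complex) \<Rightarrow> complex" where
  "shifted_op c g = (\<lambda>t. check_op j w U g t - c * g t)"

lemma shilov_character: "t \<in> S \<Longrightarrow> t \<in> characters j"
  using shilov_boundary_subset_characters[OF semisimple] by blast

lemma shilov_comp: "t \<in> S \<Longrightarrow> t \<circ> U \<in> S"
  by (rule shilov_boundary_comp_automorphism[OF automorphism])

lemma check_algebra_zero: "g \<in> X \<Longrightarrow> t \<notin> S \<Longrightarrow> g t = 0"
  unfolding check_algebra_def by auto

lemma check_algebra_approxD: "g \<in> X \<Longrightarrow> e > 0 \<Longrightarrow> \<exists>f. \<forall>t\<in>S. cmod (g t - t f) < e"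
  unfolding check_algebra_def by auto

lemma check_algebra_approx:
  assumes "g \<in> X"
  obtains f where "uniform_limit S (\<lambda>n. check_transform j (f n)) g sequentially"
proof -
  have "\<forall>n. \<exists>f. \<forall>t\<in>S. cmod (g t - t f) < inverse (real (Suc n))"
    using assms unfolding check_algebra_def by simp
  then obtain f where f: "\<And>n t. t \<in> S \<Longrightarrow> cmod (g t - t (f n)) < inverse (real (Suc n))"
    by metis
  have "uniform_limit S (\<lambda>n. check_transform j (f n)) g sequentially"
    unfolding uniform_limit_sequentially_iff
  proof (intro allI impI)
    fix e :: real assume "e > 0"
    then obtain N where N: "inverse (real (Suc N)) < e" using reals_Archimedean by blast
    have "cmod (g t - t (f n)) < e" if "n \<ge> N" "t \<in> S" for n t
    proof -
      have "inverse (real (Suc n)) \<le> inverse (real (Suc N))" using that by (simp add: le_imp_inverse_le)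
      then show ?thesis using f[OF that(2), of n] N by linarith
    qed
    then show "\<exists>N. \<forall>n\<ge>N. \<forall>t\<in>S. dist (check_transform j (f n) t) (g t) < e"
      by (auto simp: check_transform_def dist_norm norm_minus_commute)
  qed
  then show ?thesis by (rule that)
qed

lemma check_algebra_uniform_limit:
  assumes G: "\<And>n. G n \<in> X" and lim: "uniform_limit S G g sequentially"
    and zero: "\<And>t. t \<notin> S \<Longrightarrow> g t = 0"
  shows "g \<in> X"
  unfolding check_algebra_def
proof (intro CollectI conjI allI impI)
  fix e :: real assume "e > 0"
  then obtain N where "\<forall>n\<ge>N. \<forall>t\<in>S. dist (G n t) (g t) < e / 2"
    using lim unfolding uniform_limit_sequentially_iff by (metis half_gt_zero)
  then have n: "\<forall>t\<in>S. dist (G N t) (g t) < e / 2" by blast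
  obtain f where f: "\<forall>t\<in>S. cmod (G N t - t f) < e / 2"
    using check_algebra_approxD[OF G[of N], of "e / 2"] \<open>e > 0\<close> by auto
  have "cmod (g t - t f) < e" if "t \<in> S" for t
  proof -
    have "cmod (g t - t f) \<le> cmod (G N t - t f) + cmod (G N t - g t)"
      using norm_triangle_ineq4[of "G N t - t f" "G N t - g t"] by simp
    then show ?thesis using n[rule_format, OF that] f[rule_format, OF that] by (simp add: dist_norm)
  qed
  then show "\<exists>f. \<forall>t\<in>S. cmod (g t - t f) < e" by blast
qed (use zero in auto)

lemma check_transform_in_check_algebra: "check_transform j f \<in> X"
  unfolding check_algebra_def check_transform_def by (auto intro!: exI[of _ f])

lemma check_algebra_diff:
  assumes "g1 \<in> X" "g2 \<in> X"
  shows "(\<lambda>t. g1 t - g2 t) \<in> X"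
  unfolding check_algebra_def
proof (intro CollectI conjI allI impI)
  fix e :: real assume "e > 0"
  then obtain f1 f2 where f1: "\<forall>t\<in>S. cmod (g1 t - t f1) < e / 2"
      and f2: "\<forall>t\<in>S. cmod (g2 t - t f2) < e / 2"
    using check_algebra_approxD[OF assms(1), of "e / 2"] check_algebra_approxD[OF assms(2), of "e / 2"] by auto
  have "cmod (g1 t - g2 t - t (f1 - f2)) < e" if "t \<in> S" for t
  proof -
    have "g1 t - g2 t - t (f1 - f2) = (g1 t - t f1) - (g2 t - t f2)"
      using character_diff[OF shilov_character[OF that]] by simp
    also have "cmod \<dots> \<le> cmod (g1 t - t f1) + cmod (g2 t - t f2)" by (rule norm_triangle_ineq4)
    finally show ?thesis using f1 f2 that by fastforce
  qed
  then show "\<exists>f. \<forall>t\<in>S. cmod (g1 t - g2 t - t f) < e" by blast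
qed (simp add: check_algebra_zero[OF assms(1)] check_algebra_zero[OF assms(2)])

lemma check_algebra_cmult:
  assumes "g \<in> X"
  shows "(\<lambda>t. a * g t) \<in> X"
  unfolding check_algebra_def
proof (intro CollectI conjI allI impI)
  fix e :: real assume e: "e > 0"
  have pos: "cmod a + 1 > 0" by (simp add: add_nonneg_pos)
  then obtain f where f: "\<forall>t\<in>S. cmod (g t - t f) < e / (cmod a + 1)"
    using check_algebra_approxD[OF assms, of "e / (cmod a + 1)"] e by auto
  have "cmod (a * g t - t (cscale j a f)) < e" if "t \<in> S" for t
  proof -
    have "cmod (a * g t - t (cscale j a f)) = cmod a * cmod (g t - t f)"
      using character_cscale[OF shilov_character[OF that]] by (simp add: norm_mult flip: right_diff_distrib)
    also have "\<dots> \<le> cmod a * (e / (cmod a + 1))" using f that by (intro mult_left_mono) auto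
    also have "\<dots> < (cmod a + 1) * (e / (cmod a + 1))" using e pos by (intro mult_strict_right_mono) auto
    finally show ?thesis using pos by simp
  qed
  then show "\<exists>f. \<forall>t\<in>S. cmod (a * g t - t f) < e" by blast
qed (simp add: check_algebra_zero[OF assms])

lemma check_algebra_bounded:
  assumes "g \<in> X"
  obtains B where "\<And>t. t \<in> S \<Longrightarrow> cmod (g t) \<le> B"
proof -
  obtain f where f: "\<forall>t\<in>S. cmod (g t - t f) < 1" using check_algebra_approxD[OF assms, of 1] by auto
  have "cmod (g t) \<le> 1 + norm f" if "t \<in> S" for t
    using norm_triangle_ineq[of "g t - t f" "t f"] f[rule_format, OF that]
      norm_character_le[OF shilov_character[OF that], of f]
    by simp
  then show ?thesis by (rule that)
qed

lemma shifted_op_check_transform: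
  "shifted_op c (check_transform j f) = check_transform j (w * U f - cscale j c f)"
proof
  fix t
  show "shifted_op c (check_transform j f) t = check_transform j (w * U f - cscale j c f) t"
  proof (cases "t \<in> S")
    case True
    then show ?thesis
      using shilov_comp[OF True] shilov_character[OF True]
      unfolding shifted_op_def check_op_def check_transform_def
      by (simp add: characterD character_diff character_cscale)
  qed (simp add: shifted_op_def check_op_def check_transform_def)
qed

lemma shifted_op_diff: "shifted_op c (\<lambda>t. g1 t - g2 t) = (\<lambda>t. shifted_op c g1 t - shifted_op c g2 t)"
  unfolding shifted_op_def check_op_def by (auto simp: algebra_simps)

lemma shifted_op_cmult: "shifted_op c (\<lambda>t. a * g t) = (\<lambda>t. a * shifted_op c g t)"
  unfolding shifted_op_def check_op_def by (auto simp: algebra_simps)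

lemma uniform_limit_shifted_op:
  assumes "uniform_limit S G g sequentially"
  shows "uniform_limit S (\<lambda>n. shifted_op c (G n)) (shifted_op c g) sequentially"
proof (rule uniform_limitI)
  fix e :: real assume e: "e > 0"
  define K where "K = norm w + cmod c + 1"
  have K: "K > 0" unfolding K_def by (simp add: add_nonneg_pos)
  have "\<forall>\<^sub>F n in sequentially. \<forall>t\<in>S. dist (G n t) (g t) < e / K"
    using assms e K by (intro uniform_limitD) auto
  then show "\<forall>\<^sub>F n in sequentially. \<forall>t\<in>S. dist (shifted_op c (G n) t) (shifted_op c g t) < e"
  proof (rule eventually_mono, intro ballI)
    fix n t assume close: "\<forall>t\<in>S. dist (G n t) (g t) < e / K" and t: "t \<in> S"
    have tU: "t \<circ> U \<in> S" by (rule shilov_comp[OF t])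
    have "cmod (shifted_op c (G n) t - shifted_op c g t)
        = cmod (t w * (G n (t \<circ> U) - g (t \<circ> U)) - c * (G n t - g t))"
      unfolding shifted_op_def check_op_def using t by (simp add: algebra_simps)
    also have "\<dots> \<le> cmod (t w) * cmod (G n (t \<circ> U) - g (t \<circ> U)) + cmod c * cmod (G n t - g t)"
      by (metis norm_mult norm_triangle_ineq4)
    also have "\<dots> \<le> norm w * (e / K) + cmod c * (e / K)"
      using close t tU norm_character_le[OF shilov_character[OF t], of w]
      by (intro add_mono mult_mono) (auto simp: dist_norm less_imp_le)
    also have "\<dots> = (K - 1) * (e / K)" unfolding K_def by (simp add: distrib_right add_divide_distrib)
    also have "\<dots> < K * (e / K)" using e K by (intro mult_strict_right_mono) auto
    finally show "dist (shifted_op c (G n) t) (shifted_op c g t) < e" using K by (simp add: dist_norm)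
  qed
qed

lemma shifted_op_in_check_algebra:
  assumes "g \<in> X"
  shows "shifted_op c g \<in> X"
proof -
  obtain f where "uniform_limit S (\<lambda>n. check_transform j (f n)) g sequentially"
    by (rule check_algebra_approx[OF assms])
  then have "uniform_limit S (\<lambda>n. shifted_op c (check_transform j (f n))) (shifted_op c g) sequentially"
    by (rule uniform_limit_shifted_op)
  then have "uniform_limit S (\<lambda>n. check_transform j (w * U (f n) - cscale j c (f n)))
      (shifted_op c g) sequentially"
    by (simp only: shifted_op_check_transform)
  then show ?thesis
    by (rule check_algebra_uniform_limit[OF check_transform_in_check_algebra])
      (simp add: shifted_op_def check_op_def check_algebra_zero[OF assms])
qed

definition shifted_op_bounded_below :: "complex \<Rightarrow> real \<Rightarrow> bool" where
  "shifted_op_bounded_below c \<epsilon> \<longleftrightarrow>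
     (\<forall>g\<in>X. \<forall>B. (\<forall>s\<in>S. cmod (shifted_op c g s) \<le> B) \<longrightarrow> (\<forall>t\<in>S. cmod (g t) \<le> B / \<epsilon>))"

lemma shifted_op_bounded_belowI:
  assumes \<epsilon>: "\<epsilon> > 0"
    and unit: "\<And>g. g \<in> X \<Longrightarrow> sup_norm S g = 1 \<Longrightarrow> \<epsilon> \<le> sup_norm S (shifted_op c g)"
  shows "shifted_op_bounded_below c \<epsilon>"
  unfolding shifted_op_bounded_below_def
proof (intro ballI allI impI)
  fix g B t assume g: "g \<in> X" and B: "\<forall>s\<in>S. cmod (shifted_op c g s) \<le> B" and t: "t \<in> S"
  obtain Bg where "\<And>t. t \<in> S \<Longrightarrow> cmod (g t) \<le> Bg" by (rule check_algebra_bounded[OF g]) blast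
  then have le_sup: "cmod (g t) \<le> sup_norm S g" if "t \<in> S" for t
    using that by (intro norm_le_sup_norm bdd_aboveI2) auto
  have "0 \<le> B" using B t norm_ge_zero order_trans by blast
  show "cmod (g t) \<le> B / \<epsilon>"
  proof (cases "sup_norm S g = 0")
    case True
    then show ?thesis using le_sup[OF t] \<open>0 \<le> B\<close> \<epsilon> by simp
  next
    case False
    define s where "s = sup_norm S g"
    have s: "s > 0" using False le_sup[OF t] norm_ge_zero[of "g t"] unfolding s_def by linarith
    have "sup_norm S (\<lambda>t. complex_of_real (1 / s) * g t) = 1"
      using t le_sup s by (intro sup_norm_normalize) (auto simp: s_def)
    then have "\<epsilon> \<le> sup_norm S (shifted_op c (\<lambda>t. complex_of_real (1 / s) * g t))"
      using unit check_algebra_cmult[OF g] by blast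
    also have "\<dots> \<le> B / s"
      unfolding shifted_op_cmult using t B s
      by (intro sup_norm_le) (auto simp: norm_mult norm_divide divide_right_mono)
    finally have "s \<le> B / \<epsilon>" using s \<epsilon> by (simp add: field_simps)
    then show ?thesis using le_sup[OF t] unfolding s_def by linarith
  qed
qed

lemma shifted_op_bounded_below_of_not_ap_spectrum:
  assumes "c \<notin> fun_ap_spectrum S X (check_op j w U)"
  obtains \<epsilon> where "\<epsilon> > 0" "shifted_op_bounded_below c \<epsilon>"
proof -
  have "\<not> (\<forall>e>0. \<exists>g\<in>X. sup_norm S g = 1 \<and> sup_norm S (shifted_op c g) < e)"
    using assms unfolding fun_ap_spectrum_def shifted_op_def by simp
  then obtain \<epsilon> where "\<epsilon> > 0"
    and "\<And>g. g \<in> X \<Longrightarrow> sup_norm S g = 1 \<Longrightarrow> \<epsilon> \<le> sup_norm S (shifted_op c g)"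
    by (auto simp: not_less)
  then show ?thesis using shifted_op_bounded_belowI that by blast
qed

context
  fixes c :: complex and \<epsilon> :: real
  assumes eps_pos: "\<epsilon> > 0" and bounded_below: "shifted_op_bounded_below c \<epsilon>"
begin

lemma shifted_op_bounded_belowD:
  "g \<in> X \<Longrightarrow> (\<And>s. s \<in> S \<Longrightarrow> cmod (shifted_op c g s) \<le> B) \<Longrightarrow> t \<in> S \<Longrightarrow> cmod (g t) \<le> B / \<epsilon>"
  using bounded_below unfolding shifted_op_bounded_below_def by blast

lemma shifted_op_inj_on: "inj_on (shifted_op c) X"
proof (rule inj_onI)
  fix g1 g2 assume g: "g1 \<in> X" "g2 \<in> X" and eq: "shifted_op c g1 = shifted_op c g2"
  have "cmod (g1 t - g2 t) \<le> 0 / \<epsilon>" if "t \<in> S" for t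
    by (rule shifted_op_bounded_belowD[OF check_algebra_diff[OF g] _ that]) (simp add: shifted_op_diff eq)
  then have "g1 t = g2 t" for t
    using check_algebra_zero[OF g(1)] check_algebra_zero[OF g(2)] by (cases "t \<in> S") auto
  then show "g1 = g2" by blast
qed

lemma uniformly_Cauchy_of_shifted_op:
  assumes G: "\<And>n. G n \<in> X" and Cauchy: "uniformly_Cauchy_on S (\<lambda>n. shifted_op c (G n))"
  shows "uniformly_Cauchy_on S G"
proof (rule uniformly_Cauchy_onI)
  fix e :: real assume e: "e > 0"
  then obtain N where N: "\<And>t m n. t \<in> S \<Longrightarrow> m \<ge> N \<Longrightarrow> n \<ge> N
      \<Longrightarrow> dist (shifted_op c (G m) t) (shifted_op c (G n) t) < e * \<epsilon> / 2"
    using Cauchy eps_pos unfolding uniformly_Cauchy_on_def by (metis half_gt_zero mult_pos_pos)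
  have "dist (G m t) (G n t) < e" if "t \<in> S" "m \<ge> N" "n \<ge> N" for t m n
  proof -
    have "cmod (G m t - G n t) \<le> (e * \<epsilon> / 2) / \<epsilon>"
    proof (rule shifted_op_bounded_belowD[OF check_algebra_diff[OF G G] _ that(1)])
      fix s assume "s \<in> S"
      then show "cmod (shifted_op c (\<lambda>t. G m t - G n t) s) \<le> e * \<epsilon> / 2"
        using N[of s m n] that by (simp add: shifted_op_diff dist_norm)
    qed
    then show ?thesis using e eps_pos by (simp add: dist_norm)
  qed
  then show "\<exists>M. \<forall>t\<in>S. \<forall>m\<ge>M. \<forall>n\<ge>M. dist (G m t) (G n t) < e" by blast
qed

lemma shifted_op_surj_on:
  assumes T: "surj (\<lambda>f. w * U f - cscale j c f)" and g: "g \<in> X"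
  shows "g \<in> shifted_op c ` X"
proof -
  obtain f where f: "uniform_limit S (\<lambda>n. check_transform j (f n)) g sequentially"
    by (rule check_algebra_approx[OF g])
  define F where "F n = inv (\<lambda>f. w * U f - cscale j c f) (f n)" for n
  define G where "G n = check_transform j (F n)" for n
  have "w * U (F n) - cscale j c (F n) = f n" for n
    using surj_f_inv_f[OF T] unfolding F_def by simp
  then have G: "G n \<in> X" "shifted_op c (G n) = check_transform j (f n)" for n
    unfolding G_def shifted_op_check_transform by (simp_all add: check_transform_in_check_algebra)
  have "uniformly_Cauchy_on S (\<lambda>n. shifted_op c (G n))"
    unfolding G(2) by (rule uniformly_convergent_Cauchy[OF uniformly_convergentI[OF f]])
  then have "uniformly_Cauchy_on S G" by (rule uniformly_Cauchy_of_shifted_op[OF G(1)])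
  then obtain gs0 where gs0: "uniform_limit S G gs0 sequentially"
    using Cauchy_uniformly_convergent unfolding uniformly_convergent_on_def by blast
  define gs where "gs t = (if t \<in> S then gs0 t else 0)" for t
  have "uniform_limit S G gs sequentially \<longleftrightarrow> uniform_limit S G gs0 sequentially"
    by (rule uniform_limit_cong') (simp_all add: gs_def)
  with gs0 have lim: "uniform_limit S G gs sequentially" by simp
  have gs: "gs \<in> X" by (rule check_algebra_uniform_limit[OF G(1) lim]) (simp add: gs_def)
  have "shifted_op c gs = g"
  proof
    fix t
    show "shifted_op c gs t = g t"
    proof (cases "t \<in> S")
      case True
      have "(\<lambda>n. shifted_op c (G n) t) \<longlonglongrightarrow> shifted_op c gs t"
        using uniform_limit_shifted_op[OF lim] True by (rule tendsto_uniform_limitI)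
      moreover have "(\<lambda>n. shifted_op c (G n) t) \<longlonglongrightarrow> g t"
        unfolding G(2) using f True by (rule tendsto_uniform_limitI)
      ultimately show ?thesis by (rule LIMSEQ_unique)
    next
      case False
      then show ?thesis using check_algebra_zero[OF g False] by (simp add: shifted_op_def check_op_def gs_def)
    qed
  qed
  with gs show ?thesis by blast
qed

end

lemma shifted_op_bij_betw:
  assumes "bij (\<lambda>f. w * U f - cscale j c f)" "c \<notin> fun_ap_spectrum S X (check_op j w U)"
  shows "bij_betw (shifted_op c) X X"
proof -
  obtain \<epsilon> where \<epsilon>: "\<epsilon> > 0" and below: "shifted_op_bounded_below c \<epsilon>"
    by (rule shifted_op_bounded_below_of_not_ap_spectrum[OF assms(2)])
  have "inj_on (shifted_op c) X" by (rule shifted_op_inj_on[OF \<epsilon> below])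
  moreover have "shifted_op c ` X \<subseteq> X" using shifted_op_in_check_algebra by blast
  moreover have "X \<subseteq> shifted_op c ` X"
    using shifted_op_surj_on[OF \<epsilon> below bij_is_surj[OF assms(1)]] by blast
  ultimately show ?thesis unfolding bij_betw_def by blast
qed

end

theorem proposition2:
  fixes j w :: "'a::{real_normed_algebra_1,banach,comm_ring_1}" and U :: "'a \<Rightarrow> 'a"
  assumes "complex_banach_algebra j"
    and "semisimple TYPE('a)"
    and "alg_automorphism j U"
  shows "fun_spectrum (check_algebra j) (check_op j w U)
           - fun_ap_spectrum (shilov_boundary j) (check_algebra j) (check_op j w U)
         \<subseteq> alg_spectrum j (\<lambda>f. w * U f)"
proof
  interpret check_algebra_setting j w U
    using assms by unfold_locales
  fix c assume c: "c \<in> fun_spectrum X (check_op j w U) - fun_ap_spectrum S X (check_op j w U)"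
  show "c \<in> alg_spectrum j (\<lambda>f. w * U f)"
  proof (rule ccontr)
    assume "c \<notin> alg_spectrum j (\<lambda>f. w * U f)"
    then have "bij_betw (shifted_op c) X X"
      using c by (intro shifted_op_bij_betw) (auto simp: alg_spectrum_def)
    with c show False unfolding fun_spectrum_def shifted_op_def[abs_def] by simp
  qed
qed

end
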